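(* Let $M_1, M_2, N_1, N_2$ be nontrivial permutation groups. Suppose $M_1$ has property (FA), and no nontrivial quotient of $M_1$ is isomorphic to any subgroup of $M_2$ or $N_2$. Then $M_1 \boxtimes N_1$ and $M_2 \boxtimes N_2$ are not (abstractly) isomorphic.
   Context: Box product: let $\Omega$ and $\Delta$ be disjoint sets, each of cardinality at least two, and let $M \leq \mathrm{Sym}(\Omega)$ and $N \leq \mathrm{Sym}(\Delta)$ be nontrivial permutation groups. Let $T$ be the $(|\Omega|,|\Delta|)$-biregular tree, with $V_\Omega$ the part of its bipartition consisting of vertices of valency $|\Omega|$ and $V_\Delta$ the part consisting of vertices of valency $|\Delta|$. For a vertex $v$, $A(v)$ denotes the set of arcs with origin $v$ and $\overline{A}(v)$ the set of arcs with terminus $v$. A legal colouring is a map $c : AT \to \Omega \cup \Delta$ such that $c|_{A(v)} : A(v) \to \Omega$ is a bijection for every $v \in V_\Omega$, $c|_{A(v)} : A(v) \to \Delta$ is a bijection for every $v \in V_\Delta$, and $c|_{\overline{A}(v)}$ has image of cardinality one for every vertex $v$. Define $U(M,N) = \{ g \in (\mathrm{Aut}\, T)_{\{V_\Omega\}} : c|_{A(gv)}\, g|_{A(v)}\, c|_{A(v)}^{-1} \in M \text{ for all } v \in V_\Omega,\ \in N \text{ for all } v \in V_\Delta\}$. The box product $M \boxtimes N$ is the subgroup of $\mathrm{Sym}(V_\Delta)$ induced by $U(M,N)$; up to permutation isomorphism it does not depend on the choice of legal colouring $c$. A group $G$ has Serre's property (FA) if, whenever $G$ acts on a tree without inversion,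 some vertex of the tree is fixed by all elements of $G$. *)

theory Defs
  imports "HOL-Algebra.Algebra"
begin

definition perm_group :: "'c set \<Rightarrow> ('c \<Rightarrow> 'c) set \<Rightarrow> bool" where
  "perm_group \<Omega> M \<longleftrightarrow> subgroup M (BijGroup \<Omega>)"

definition pgrp :: "'c set \<Rightarrow> ('c \<Rightarrow> 'c) set \<Rightarrow> ('c \<Rightarrow> 'c) monoid" where
  "pgrp \<Omega> M = (BijGroup \<Omega>)\<lparr>carrier := M\<rparr>"

definition nontrivial_perm_group :: "'c set \<Rightarrow> ('c \<Rightarrow> 'c) set \<Rightarrow> bool" where
  "nontrivial_perm_group \<Omega> M \<longleftrightarrow> perm_group \<Omega> M \<and> M \<noteq> {\<one>\<^bsub>BijGroup \<Omega>\<^esub>}"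

definition walk :: "('v \<Rightarrow> 'v \<Rightarrow> bool) \<Rightarrow> 'v list \<Rightarrow> bool" where
  "walk E xs \<longleftrightarrow> xs \<noteq> [] \<and> (\<forall>i. Suc i < length xs \<longrightarrow> E (xs ! i) (xs ! Suc i))"

definition reduced :: "'v list \<Rightarrow> bool" where
  "reduced xs \<longleftrightarrow> (\<forall>i. i + 2 < length xs \<longrightarrow> xs ! i \<noteq> xs ! (i + 2))"

definition is_tree :: "'v set \<Rightarrow> ('v \<Rightarrow> 'v \<Rightarrow> bool) \<Rightarrow> bool" where
  "is_tree V E \<longleftrightarrow> V \<noteq> {}
     \<and> (\<forall>u v. E u v \<longrightarrow> u \<in> V \<and> v \<in> V)
     \<and> (\<forall>u v. E u v \<longrightarrow> E v u)
     \<and> (\<forall>v. \<not> E v v)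
     \<and> (\<forall>u\<in>V. \<forall>v\<in>V. \<exists>!xs. walk E xs \<and> reduced xs \<and> hd xs = u \<and> last xs = v)"

definition tree_action :: "('g, 'b) monoid_scheme \<Rightarrow> 'v set \<Rightarrow> ('v \<Rightarrow> 'v \<Rightarrow> bool) \<Rightarrow> ('g \<Rightarrow> 'v \<Rightarrow> 'v) \<Rightarrow> bool" where
  "tree_action G V E \<phi> \<longleftrightarrow> \<phi> \<in> hom G (BijGroup V)
     \<and> (\<forall>g\<in>carrier G. \<forall>u v. E u v \<longrightarrow> E (\<phi> g u) (\<phi> g v))"

definition without_inversion :: "('g, 'b) monoid_scheme \<Rightarrow> ('v \<Rightarrow> 'v \<Rightarrow> bool) \<Rightarrow> ('g \<Rightarrow> 'v \<Rightarrow> 'v) \<Rightarrow> bool" where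
  "without_inversion G E \<phi> \<longleftrightarrow> (\<forall>g\<in>carrier G. \<forall>u v. E u v \<longrightarrow> \<not> (\<phi> g u = v \<and> \<phi> g v = u))"

text \<open>Property (FA).  Trees are taken with vertices in the type 'g \<times> nat, which is no
  restriction: the subtree spanned by one orbit is invariant and has at most
  max(|G|, aleph_0) vertices.\<close>
definition property_FA :: "('g, 'b) monoid_scheme \<Rightarrow> bool" where
  "property_FA G \<longleftrightarrow> (\<forall>(V :: ('g \<times> nat) set) E \<phi>.
      is_tree V E \<and> tree_action G V E \<phi> \<and> without_inversion G E \<phi>
      \<longrightarrow> (\<exists>v\<in>V. \<forall>g\<in>carrier G. \<phi> g v = v))"

definition arcs_out :: "('v \<Rightarrow> 'v \<Rightarrow> bool) \<Rightarrow> 'v \<Rightarrow> ('v \<times> 'v) set" where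
  "arcs_out E v = {(v, u) | u. E v u}"

definition arcs_in :: "('v \<Rightarrow> 'v \<Rightarrow> bool) \<Rightarrow> 'v \<Rightarrow> ('v \<times> 'v) set" where
  "arcs_in E v = {(u, v) | u. E u v}"

text \<open>(V,E) is a tree with bipartition VO (vertices of valency |Omega|) and VD
  (valency |Delta|), and c is a legal colouring.  (The valencies are forced by the
  bijectivity conditions of the legal colouring.)\<close>
definition legal_coloured_biregular_tree ::
  "'c set \<Rightarrow> 'c set \<Rightarrow> 'v set \<Rightarrow> ('v \<Rightarrow> 'v \<Rightarrow> bool) \<Rightarrow> 'v set \<Rightarrow> 'v set \<Rightarrow> ('v \<times> 'v \<Rightarrow> 'c) \<Rightarrow> bool" where
  "legal_coloured_biregular_tree \<Omega> \<Delta> V E VO VD c \<longleftrightarrow>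
     is_tree V E \<and> VO \<union> VD = V \<and> VO \<inter> VD = {}
     \<and> (\<forall>u v. E u v \<longrightarrow> (u \<in> VO \<and> v \<in> VD) \<or> (u \<in> VD \<and> v \<in> VO))
     \<and> (\<forall>v\<in>VO. bij_betw c (arcs_out E v) \<Omega>)
     \<and> (\<forall>v\<in>VD. bij_betw c (arcs_out E v) \<Delta>)
     \<and> (\<forall>v\<in>V. card (c ` arcs_in E v) = 1)"

text \<open>Local action of g at v: c|A(gv) o g|A(v) o (c|A(v))^-1, as an (extensional)
  permutation of the colour set S.\<close>
definition local_action ::
  "'c set \<Rightarrow> ('v \<Rightarrow> 'v \<Rightarrow> bool) \<Rightarrow> ('v \<times> 'v \<Rightarrow> 'c) \<Rightarrow> ('v \<Rightarrow> 'v) \<Rightarrow> 'v \<Rightarrow> 'c \<Rightarrow> 'c" where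
  "local_action S E c g v = (\<lambda>a\<in>S. c (g v, g (THE u. E v u \<and> c (v, u) = a)))"

definition tree_aut :: "'v set \<Rightarrow> ('v \<Rightarrow> 'v \<Rightarrow> bool) \<Rightarrow> ('v \<Rightarrow> 'v) set" where
  "tree_aut V E = {g. bij_betw g V V \<and> (\<forall>u\<in>V. \<forall>v\<in>V. E u v \<longleftrightarrow> E (g u) (g v))}"

definition U_group ::
  "'c set \<Rightarrow> 'c set \<Rightarrow> ('c \<Rightarrow> 'c) set \<Rightarrow> ('c \<Rightarrow> 'c) set \<Rightarrow> 'v set \<Rightarrow> ('v \<Rightarrow> 'v \<Rightarrow> bool)
    \<Rightarrow> 'v set \<Rightarrow> 'v set \<Rightarrow> ('v \<times> 'v \<Rightarrow> 'c) \<Rightarrow> ('v \<Rightarrow> 'v) set" where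
  "U_group \<Omega> \<Delta> M N V E VO VD c =
     {g \<in> tree_aut V E. g ` VO = VO
        \<and> (\<forall>v\<in>VO. local_action \<Omega> E c g v \<in> M)
        \<and> (\<forall>v\<in>VD. local_action \<Delta> E c g v \<in> N)}"

definition box_product_set ::
  "'c set \<Rightarrow> 'c set \<Rightarrow> ('c \<Rightarrow> 'c) set \<Rightarrow> ('c \<Rightarrow> 'c) set \<Rightarrow> 'v set \<Rightarrow> ('v \<Rightarrow> 'v \<Rightarrow> bool)
    \<Rightarrow> 'v set \<Rightarrow> 'v set \<Rightarrow> ('v \<times> 'v \<Rightarrow> 'c) \<Rightarrow> ('v \<Rightarrow> 'v) set" where
  "box_product_set \<Omega> \<Delta> M N V E VO VD c = (\<lambda>g. restrict g VD) ` U_group \<Omega> \<Delta> M N V E VO VD c"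

definition box_product ::
  "'c set \<Rightarrow> 'c set \<Rightarrow> ('c \<Rightarrow> 'c) set \<Rightarrow> ('c \<Rightarrow> 'c) set \<Rightarrow> 'v set \<Rightarrow> ('v \<Rightarrow> 'v \<Rightarrow> bool)
    \<Rightarrow> 'v set \<Rightarrow> 'v set \<Rightarrow> ('v \<times> 'v \<Rightarrow> 'c) \<Rightarrow> ('v \<Rightarrow> 'v) monoid" where
  "box_product \<Omega> \<Delta> M N V E VO VD c = (BijGroup VD)\<lparr>carrier := box_product_set \<Omega> \<Delta> M N V E VO VD c\<rparr>"

definition box_data :: "'c set \<Rightarrow> 'c set \<Rightarrow> ('c \<Rightarrow> 'c) set \<Rightarrow> ('c \<Rightarrow> 'c) set \<Rightarrow> bool" where
  "box_data \<Omega> \<Delta> M N \<longleftrightarrow> \<Omega> \<inter> \<Delta> = {}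
     \<and> (\<exists>a\<in>\<Omega>. \<exists>b\<in>\<Omega>. a \<noteq> b) \<and> (\<exists>a\<in>\<Delta>. \<exists>b\<in>\<Delta>. a \<noteq> b)
     \<and> nontrivial_perm_group \<Omega> M \<and> nontrivial_perm_group \<Delta> N"

end

theory Submission
  imports Defs
begin

text \<open>
  Fix a vertex \<open>v\<^sub>0 \<in> V\<^sub>\<Omega>\<close> of the first tree. Every vertex is addressed by the colour word of the
  path from \<open>v\<^sub>0\<close> to it, and \<open>m \<in> M\<^sub>1\<close> acts on addresses by applying \<open>m\<close> to the letters that
  leave a vertex of \<open>V\<^sub>\<Omega>\<close>. This is an element of \<open>U(M\<^sub>1,N\<^sub>1)\<close>, so \<open>M\<^sub>1\<close> maps nontrivially into
  \<open>M\<^sub>1 \<boxtimes> N\<^sub>1\<close>. An isomorphism onto \<open>M\<^sub>2 \<boxtimes> N\<^sub>2\<close> then lets \<open>M\<^sub>1\<close> act nontrivially on the second tree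
  through elements of \<open>U(M\<^sub>2,N\<^sub>2)\<close>, which are determined by their restriction to \<open>V\<^sub>\<Delta>\<close> and preserve
  the bipartition, hence act without inversion. By (FA) some vertex is fixed; walking from it to a
  moved vertex yields a fixed vertex \<open>u\<close> with a moved neighbour. The local action at \<open>u\<close> is then a
  nontrivial homomorphism from \<open>M\<^sub>1\<close> to \<open>M\<^sub>2\<close> or \<open>N\<^sub>2\<close>, and its image is a nontrivial quotient
  of \<open>M\<^sub>1\<close> isomorphic to a subgroup, which the hypotheses exclude.
\<close>

section \<open>Walks and reduced walks\<close>

lemma walk_Nil [simp]: "\<not> walk E []"
  by (simp add: walk_def)

lemma walk_single [simp]: "walk E [x]"
  by (simp add: walk_def)

lemma walk_Cons_Cons [simp]: "walk E (x # y # xs) \<longleftrightarrow> E x y \<and> walk E (y # xs)"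
proof
  assume "walk E (x # y # xs)"
  then show "E x y \<and> walk E (y # xs)"
    unfolding walk_def by (auto; metis Suc_less_eq length_Cons nth_Cons_Suc)
next
  assume a: "E x y \<and> walk E (y # xs)"
  show "walk E (x # y # xs)"
    unfolding walk_def
  proof (intro conjI allI impI)
    fix i assume "Suc i < length (x # y # xs)"
    then show "E ((x # y # xs) ! i) ((x # y # xs) ! Suc i)"
      using a unfolding walk_def by (cases i) auto
  qed simp
qed

lemma reduced_Nil [simp]: "reduced []"
  and reduced_single [simp]: "reduced [x]"
  and reduced_pair [simp]: "reduced [x, y]"
  by (simp_all add: reduced_def)

lemma reduced_Cons_Cons_Cons [simp]:
  "reduced (x # y # z # xs) \<longleftrightarrow> x \<noteq> z \<and> reduced (y # z # xs)"
proof
  assume a: "reduced (x # y # z # xs)"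
  have "reduced (y # z # xs)"
    unfolding reduced_def
  proof (intro allI impI)
    fix i assume "i + 2 < length (y # z # xs)"
    then show "(y # z # xs) ! i \<noteq> (y # z # xs) ! (i + 2)"
      using a[unfolded reduced_def, rule_format, of "Suc i"] by simp
  qed
  then show "x \<noteq> z \<and> reduced (y # z # xs)"
    using a[unfolded reduced_def, rule_format, of 0] by simp
next
  assume a: "x \<noteq> z \<and> reduced (y # z # xs)"
  show "reduced (x # y # z # xs)"
    unfolding reduced_def
  proof (intro allI impI)
    fix i assume i: "i + 2 < length (x # y # z # xs)"
    show "(x # y # z # xs) ! i \<noteq> (x # y # z # xs) ! (i + 2)"
    proof (cases i)
      case (Suc j)
      then show ?thesis
        using a i unfolding reduced_def
        by (metis Suc_eq_plus1 add.commute add_2_eq_Suc' add_less_cancel_left length_Cons nth_Cons_Suc)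
    qed (use a in simp)
  qed
qed

lemma walk_append_single_iff:
  "xs \<noteq> [] \<Longrightarrow> walk E (xs @ [y]) \<longleftrightarrow> walk E xs \<and> E (last xs) y"
  by (induction xs rule: induct_list012) auto

lemma reduced_append_single_iff:
  "reduced (xs @ [y]) \<longleftrightarrow> reduced xs \<and> (2 \<le> length xs \<longrightarrow> xs ! (length xs - 2) \<noteq> y)"
proof (induction xs rule: induct_list012)
  case (3 x z zs)
  then show ?case
    by (cases zs) auto
qed auto

lemma walk_append: "walk E xs \<Longrightarrow> walk E ys \<Longrightarrow> E (last xs) (hd ys) \<Longrightarrow> walk E (xs @ ys)"
proof (induction xs rule: induct_list012)
  case (2 x)
  then show ?case by (cases ys) auto
qed auto

lemma walk_join: "walk E xs \<Longrightarrow> walk E ys \<Longrightarrow> last xs = hd ys \<Longrightarrow> walk E (xs @ tl ys)"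
proof (cases ys)
  case (Cons y ys')
  then show "walk E xs \<Longrightarrow> walk E ys \<Longrightarrow> last xs = hd ys \<Longrightarrow> walk E (xs @ tl ys)"
    by (cases ys') (auto intro: walk_append)
qed simp

lemma last_append_tl: "xs \<noteq> [] \<Longrightarrow> ys \<noteq> [] \<Longrightarrow> last xs = hd ys \<Longrightarrow> last (xs @ tl ys) = last ys"
  by (cases ys) auto

lemma walk_rev: "(\<And>u v. E u v \<Longrightarrow> E v u) \<Longrightarrow> walk E xs \<Longrightarrow> walk E (rev xs)"
proof (induction xs rule: induct_list012)
  case (3 x z zs)
  then show ?case
    using walk_append_single_iff[of "rev (z # zs)" E x] by simp
qed auto

lemma walk_take: "walk E xs \<Longrightarrow> 0 < n \<Longrightarrow> walk E (take n xs)"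
  unfolding walk_def by auto

lemma walk_drop: "walk E xs \<Longrightarrow> n < length xs \<Longrightarrow> walk E (drop n xs)"
  unfolding walk_def by (auto simp: add.commute[of n])

lemma reduced_take: "reduced xs \<Longrightarrow> reduced (take n xs)"
  unfolding reduced_def by auto

lemma walk_map_on:
  assumes "walk E xs" "set xs \<subseteq> W" "\<And>u v. u \<in> W \<Longrightarrow> v \<in> W \<Longrightarrow> E u v \<Longrightarrow> E' (f u) (f v)"
  shows "walk E' (map f xs)"
  using assms by (induction xs rule: induct_list012) auto

lemma reduced_map: "inj_on f (set xs) \<Longrightarrow> reduced xs \<Longrightarrow> reduced (map f xs)"
proof (induction xs rule: induct_list012)
  case (3 x z zs)
  then show ?case by (cases zs) (auto simp: inj_on_def)
qed auto

lemma walk_subset: "walk E xs \<Longrightarrow> (\<And>u v. E u v \<Longrightarrow> u \<in> V \<and> v \<in> V) \<Longrightarrow> hd xs \<in> V \<Longrightarrow> set xs \<subseteq> V"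
  by (induction xs rule: induct_list012) auto

lemma walk_leaves_set:
  "walk E xs \<Longrightarrow> hd xs \<in> F \<Longrightarrow> last xs \<notin> F \<Longrightarrow> \<exists>u w. u \<in> F \<and> w \<notin> F \<and> E u w"
proof (induction xs rule: induct_list012)
  case (3 x y zs)
  then show ?case by (cases "y \<in> F") auto
qed auto

text \<open>Cutting out a backtrack \<open>x y x\<close> shortens a walk, so every walk can be reduced.\<close>
lemma walk_reduce:
  assumes "walk E xs"
  obtains ys where "walk E ys" "reduced ys" "hd ys = hd xs" "last ys = last xs" "set ys \<subseteq> set xs"
  using assms
proof (induction "length xs" arbitrary: xs rule: less_induct)
  case less
  show ?case
  proof (cases "reduced xs")
    case False
    then obtain i where i: "i + 2 < length xs" "xs ! i = xs ! (i + 2)"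
      unfolding reduced_def by auto
    define zs where "zs = take (Suc i) xs @ drop (i + 3) xs"
    have last_take: "last (take (Suc i) xs) = xs ! i"
      using i by (simp add: take_Suc_conv_app_nth)
    have "walk E zs"
    proof (cases "i + 3 < length xs")
      case True
      have "E (xs ! (i + 2)) (xs ! (i + 3))"
        using less.prems(2) True unfolding walk_def
        by (metis add_Suc_right numeral_2_eq_2 numeral_3_eq_3)
      then show ?thesis
        unfolding zs_def
        using walk_take[OF less.prems(2)] walk_drop[OF less.prems(2) True] True i last_take
        by (intro walk_append) (auto simp: hd_drop_conv_nth)
    qed (use walk_take[OF less.prems(2), of "Suc i"] zs_def in simp)
    moreover have "hd zs = hd xs"
      using i by (simp add: zs_def hd_append)
    moreover have "last zs = last xs"
    proof (cases "i + 3 < length xs")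
      case False
      then have "length xs = i + 3" "xs \<noteq> []" using i by auto
      then have "last xs = xs ! (i + 2)" by (simp add: last_conv_nth)
      then show ?thesis using False i last_take by (simp add: zs_def)
    qed (simp add: zs_def)
    moreover have "set zs \<subseteq> set xs"
      unfolding zs_def by (metis Un_subset_iff set_append set_drop_subset set_take_subset)
    moreover have "length zs < length xs"
      using i by (simp add: zs_def)
    ultimately show ?thesis
      using less.hyps[OF _ _ \<open>walk E zs\<close>] less.prems(1) by (metis order.trans)
  qed (use less in blast)
qed

section \<open>Paths in trees\<close>

locale tree =
  fixes V :: "'v set" and E :: "'v \<Rightarrow> 'v \<Rightarrow> bool"
  assumes is_tree: "is_tree V E"
begin

lemma adj_in_V: "E u v \<Longrightarrow> u \<in> V \<and> v \<in> V"
  using is_tree unfolding is_tree_def by blast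

lemma adj_sym: "E u v \<Longrightarrow> E v u"
  using is_tree unfolding is_tree_def by blast

lemma adj_irrefl: "\<not> E v v"
  using is_tree unfolding is_tree_def by blast

lemma V_nonempty: "V \<noteq> {}"
  using is_tree unfolding is_tree_def by blast

definition path :: "'v \<Rightarrow> 'v \<Rightarrow> 'v list" where
  "path u v = (THE xs. walk E xs \<and> reduced xs \<and> hd xs = u \<and> last xs = v)"

lemma ex1_reduced_walk: "u \<in> V \<Longrightarrow> v \<in> V \<Longrightarrow> \<exists>!xs. walk E xs \<and> reduced xs \<and> hd xs = u \<and> last xs = v"
  using is_tree unfolding is_tree_def by blast

lemma path_props:
  assumes "u \<in> V" "v \<in> V"
  shows "walk E (path u v)" "reduced (path u v)" "hd (path u v) = u" "last (path u v) = v"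
  using theI'[OF ex1_reduced_walk[OF assms]] unfolding path_def by auto

lemma path_walk: "u \<in> V \<Longrightarrow> v \<in> V \<Longrightarrow> walk E (path u v)"
  and path_reduced: "u \<in> V \<Longrightarrow> v \<in> V \<Longrightarrow> reduced (path u v)"
  and path_hd: "u \<in> V \<Longrightarrow> v \<in> V \<Longrightarrow> hd (path u v) = u"
  and path_last: "u \<in> V \<Longrightarrow> v \<in> V \<Longrightarrow> last (path u v) = v"
  using path_props by blast+

lemma path_nonempty: "u \<in> V \<Longrightarrow> v \<in> V \<Longrightarrow> path u v \<noteq> []"
  using path_walk walk_Nil by metis

lemma path_unique:
  "u \<in> V \<Longrightarrow> v \<in> V \<Longrightarrow> walk E xs \<Longrightarrow> reduced xs \<Longrightarrow> hd xs = u \<Longrightarrow> last xs = v \<Longrightarrow> xs = path u v"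
  using ex1_reduced_walk path_props by metis

lemma walk_subset_V: "walk E xs \<Longrightarrow> hd xs \<in> V \<Longrightarrow> set xs \<subseteq> V"
  using walk_subset adj_in_V by metis

lemma path_subset_V: "u \<in> V \<Longrightarrow> v \<in> V \<Longrightarrow> set (path u v) \<subseteq> V"
  using walk_subset_V path_walk path_hd by metis

lemma path_self: "u \<in> V \<Longrightarrow> path u u = [u]"
  using path_unique[of u u "[u]"] by simp

lemma path_subset_walk:
  assumes "walk E xs" "hd xs \<in> V"
  shows "set (path (hd xs) (last xs)) \<subseteq> set xs"
proof -
  obtain ys where ys: "walk E ys" "reduced ys" "hd ys = hd xs" "last ys = last xs" "set ys \<subseteq> set xs"
    using walk_reduce[OF assms(1)] .
  have "last xs \<in> V"
    using walk_subset_V[OF assms] assms(1) by (cases xs) auto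
  then have "ys = path (hd xs) (last xs)"
    using path_unique ys assms(2) by metis
  then show ?thesis using ys by simp
qed

lemma path_prefix_subset:
  assumes "u \<in> V" "v \<in> V" "x \<in> set (path u v)"
  shows "set (path u x) \<subseteq> set (path u v)"
proof -
  obtain i where i: "i < length (path u v)" "path u v ! i = x"
    using assms(3) by (meson in_set_conv_nth)
  let ?t = "take (Suc i) (path u v)"
  have "?t = path u x"
  proof (rule path_unique)
    show "x \<in> V" using path_subset_V assms by blast
    show "walk E ?t" "reduced ?t"
      using walk_take reduced_take path_walk path_reduced assms by blast+
    show "hd ?t = u" using path_hd[OF assms(1,2)] path_nonempty[OF assms(1,2)] by simp
    show "last ?t = x" using i by (simp add: take_Suc_conv_app_nth)
  qed (use assms in simp)
  then show ?thesis by (metis set_take_subset)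
qed

lemma path_subset_paths_from:
  assumes "u \<in> V" "x \<in> V" "y \<in> V"
  shows "set (path x y) \<subseteq> set (path u x) \<union> set (path u y)"
proof -
  let ?w = "rev (path u x) @ tl (path u y)"
  have "walk E ?w"
    using walk_join[OF walk_rev[OF _ path_walk[OF assms(1,2)]] path_walk[OF assms(1,3)]]
      adj_sym path_hd path_nonempty assms by (simp add: last_rev)
  moreover have "hd ?w = x"
    using path_last path_nonempty assms by (simp add: hd_append hd_rev)
  moreover have "last ?w = y"
    using last_append_tl[of "rev (path u x)" "path u y"] path_last path_nonempty path_hd assms
    by (simp add: last_rev)
  ultimately have "set (path x y) \<subseteq> set ?w"
    using path_subset_walk assms by metis
  also have "\<dots> \<subseteq> set (path u x) \<union> set (path u y)"
    by (cases "path u y") auto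
  finally show ?thesis .
qed

lemma path_adjacent_cases:
  assumes r: "r \<in> V" and e: "E x y"
  shows "path r y = path r x @ [y] \<or> path r x = path r y @ [x]"
proof -
  have xV: "x \<in> V" and yV: "y \<in> V" using adj_in_V e by auto
  let ?P = "path r x"
  have ne: "?P \<noteq> []" using path_nonempty r xV .
  show ?thesis
  proof (cases "2 \<le> length ?P \<and> ?P ! (length ?P - 2) = y")
    case True
    let ?t = "take (length ?P - 1) ?P"
    have "?t = path r y"
    proof (rule path_unique[OF r yV])
      show "walk E ?t" using walk_take[OF path_walk[OF r xV], of "length ?P - 1"] True by simp
      show "reduced ?t" using reduced_take path_reduced r xV by blast
      show "hd ?t = r" using path_hd[OF r xV] ne True by simp
      have "length ?P - 1 = Suc (length ?P - 2)" using True by linarith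
      then show "last ?t = y" using True by (simp add: take_Suc_conv_app_nth)
    qed
    moreover have "?P = ?t @ [x]"
      using path_last[OF r xV] ne by (metis append_butlast_last_id butlast_conv_take)
    ultimately show ?thesis by simp
  next
    case False
    have "?P @ [y] = path r y"
    proof (rule path_unique[OF r yV])
      show "walk E (?P @ [y])"
        using walk_append_single_iff[OF ne] path_walk path_last r xV e by simp
      show "reduced (?P @ [y])"
        unfolding reduced_append_single_iff using path_reduced[OF r xV] False by blast
    qed (use path_hd r xV ne in simp_all)
    then show ?thesis by simp
  qed
qed

lemma map_path:
  assumes "\<And>u v. E u v \<Longrightarrow> E (f u) (f v)" "f ` V \<subseteq> V" "inj_on f V" "u \<in> V" "v \<in> V"
  shows "map f (path u v) = path (f u) (f v)"
proof (rule path_unique)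
  show "walk E (map f (path u v))"
    using walk_map_on[OF path_walk[OF assms(4,5)] order.refl] assms(1) by blast
  show "reduced (map f (path u v))"
    using reduced_map path_reduced path_subset_V assms inj_on_subset by metis
qed (use path_hd path_last path_nonempty assms in \<open>auto simp: hd_map last_map\<close>)

lemma is_tree_image:
  fixes W :: "'v set" and f :: "'v \<Rightarrow> 'w"
  assumes WV: "W \<subseteq> V" and W_ne: "W \<noteq> {}"
    and closed: "\<And>x y. x \<in> W \<Longrightarrow> y \<in> W \<Longrightarrow> set (path x y) \<subseteq> W"
    and inj: "inj_on f W"
  shows "is_tree (f ` W) (\<lambda>a b. \<exists>x\<in>W. \<exists>y\<in>W. a = f x \<and> b = f y \<and> E x y)"
    (is "is_tree _ ?E")
proof -
  define h where "h = inv_into W f"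
  have hf: "\<And>x. x \<in> W \<Longrightarrow> h (f x) = x" unfolding h_def using inj by simp
  have E'_in: "\<And>a b. ?E a b \<Longrightarrow> a \<in> f ` W \<and> b \<in> f ` W" by blast
  have image_path: "walk ?E (map f (path x y)) \<and> reduced (map f (path x y))
         \<and> hd (map f (path x y)) = f x \<and> last (map f (path x y)) = f y"
    if xy: "x \<in> W" "y \<in> W" for x y
  proof -
    have xyV: "x \<in> V" "y \<in> V" using xy WV by auto
    have "walk ?E (map f (path x y))"
      by (rule walk_map_on[OF path_walk[OF xyV] closed[OF xy]]) blast
    moreover have "reduced (map f (path x y))"
      using reduced_map[OF inj_on_subset[OF inj closed[OF xy]] path_reduced[OF xyV]] .
    ultimately show ?thesis
      using path_hd path_last path_nonempty xyV by (simp add: hd_map last_map)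
  qed
  have image_path_unique: "ys = map f (path x y)"
    if xy: "x \<in> W" "y \<in> W" and ys: "walk ?E ys" "reduced ys" "hd ys = f x" "last ys = f y" for x y ys
  proof -
    have ne: "ys \<noteq> []" using ys by auto
    have sys: "set ys \<subseteq> f ` W"
      by (rule walk_subset[OF ys(1), of "f ` W"]) (use E'_in ys(3) xy in auto)
    have "map h ys = path x y"
    proof (rule path_unique)
      show "walk E (map h ys)"
        by (rule walk_map_on[OF ys(1) sys]) (auto simp: hf)
      show "reduced (map h ys)"
        using reduced_map[OF inj_on_subset[OF _ sys] ys(2)] inj_on_inv_into[of "f ` W" f W]
        unfolding h_def by auto
    qed (use ys ne hf xy WV in \<open>auto simp: hd_map last_map\<close>)
    moreover have "map f (map h ys) = ys"
      using sys unfolding h_def by (induction ys) (auto simp: f_inv_into_f)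
    ultimately show ?thesis by metis
  qed
  show ?thesis
    unfolding is_tree_def
  proof (intro conjI allI impI ballI)
    show "f ` W \<noteq> {}" using W_ne by simp
  next
    fix u v assume "?E u v"
    then show "u \<in> f ` W" "v \<in> f ` W" "?E v u" using adj_sym by blast+
  next
    fix v show "\<not> ?E v v"
      using adj_irrefl inj by (auto dest: inj_onD)
  next
    fix a b assume "a \<in> f ` W" "b \<in> f ` W"
    then obtain x y where xy: "x \<in> W" "y \<in> W" "a = f x" "b = f y" by blast
    show "\<exists>!xs. walk ?E xs \<and> reduced xs \<and> hd xs = a \<and> last xs = b"
      by (rule ex1I[of _ "map f (path x y)"])
        (use image_path[OF xy(1,2)] image_path_unique[OF xy(1,2)] xy(3,4) in auto)
  qed
qed

end

section \<open>Property (FA) for trees on arbitrary vertex types\<close>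

lemma BijGroup_carrier [simp]: "carrier (BijGroup S) = Bij S"
  by (simp add: BijGroup_def)

lemma BijGroup_one [simp]: "\<one>\<^bsub>BijGroup S\<^esub> = (\<lambda>x\<in>S. x)"
  by (simp add: BijGroup_def)

lemma BijGroup_mult: "f \<in> Bij S \<Longrightarrow> g \<in> Bij S \<Longrightarrow> f \<otimes>\<^bsub>BijGroup S\<^esub> g = compose S f g"
  by (simp add: BijGroup_def)

lemma Bij_inj_on_image: "f \<in> Bij S \<Longrightarrow> inj_on f S \<and> f ` S \<subseteq> S"
  by (simp add: Bij_def bij_betw_def)

lemma restrict_in_Bij_iff: "restrict f S \<in> Bij S \<longleftrightarrow> bij_betw f S S"
  by (simp add: Bij_def)

lemma hom_BijGroup_mult_apply:
  assumes "\<Phi> \<in> hom G (BijGroup V)" "g \<in> carrier G" "k \<in> carrier G" "x \<in> V"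
  shows "\<Phi> (g \<otimes>\<^bsub>G\<^esub> k) x = \<Phi> g (\<Phi> k x)"
proof -
  have "\<Phi> g \<in> Bij V" "\<Phi> k \<in> Bij V"
    using hom_in_carrier[OF assms(1)] assms(2,3) by auto
  then show ?thesis
    using hom_mult[OF assms(1-3)] assms(4) by (simp add: BijGroup_mult compose_def)
qed

lemma hom_BijGroup_inv_apply:
  assumes "group G" "\<Phi> \<in> hom G (BijGroup V)" "g \<in> carrier G" "x \<in> V"
  shows "\<Phi> g (\<Phi> (inv\<^bsub>G\<^esub> g) x) = x"
proof -
  have "\<Phi> g (\<Phi> (inv\<^bsub>G\<^esub> g) x) = \<Phi> (g \<otimes>\<^bsub>G\<^esub> inv\<^bsub>G\<^esub> g) x"
    using hom_BijGroup_mult_apply[OF assms(2,3) group.inv_closed[OF assms(1,3)] assms(4)] by simp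
  also have "\<dots> = \<Phi> \<one>\<^bsub>G\<^esub> x"
    using group.r_inv[OF assms(1,3)] by simp
  also have "\<dots> = x"
    using hom_one[OF assms(2,1) group_BijGroup] assms(4) by simp
  finally show ?thesis .
qed

lemma inj_on_UN_set_into_index_pairs:
  fixes xs :: "'k \<Rightarrow> 'a list"
  shows "\<exists>enc :: 'a \<Rightarrow> 'k \<times> nat. inj_on enc (\<Union>k\<in>K. set (xs k))"
proof
  define enc where "enc x = (SOME p. fst p \<in> K \<and> snd p < length (xs (fst p)) \<and> xs (fst p) ! snd p = x)"
    for x
  show "inj_on enc (\<Union>k\<in>K. set (xs k))"
  proof (rule inj_on_inverseI)
    fix x assume "x \<in> (\<Union>k\<in>K. set (xs k))"
    then have "\<exists>p. fst p \<in> K \<and> snd p < length (xs (fst p)) \<and> xs (fst p) ! snd p = x"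
      by (force simp: in_set_conv_nth)
    then show "xs (fst (enc x)) ! snd (enc x) = x"
      unfolding enc_def by (rule someI2_ex) blast
  qed
qed

context tree
begin

lemma orbit_hull:
  fixes G :: "('g, 'b) monoid_scheme"
  assumes G: "group G" and act: "tree_action G V E \<Phi>" and v: "v \<in> V"
  defines "W \<equiv> \<Union>k\<in>carrier G. set (path v (\<Phi> k v))"
  shows "W \<subseteq> V" "v \<in> W"
    and "\<And>x y. x \<in> W \<Longrightarrow> y \<in> W \<Longrightarrow> set (path x y) \<subseteq> W"
    and "\<And>g x. g \<in> carrier G \<Longrightarrow> x \<in> W \<Longrightarrow> \<Phi> g x \<in> W"
proof -
  have hom: "\<Phi> \<in> hom G (BijGroup V)"
    and pres: "\<And>g u w. g \<in> carrier G \<Longrightarrow> E u w \<Longrightarrow> E (\<Phi> g u) (\<Phi> g w)"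
    using act unfolding tree_action_def by auto
  have Bij: "\<And>g. g \<in> carrier G \<Longrightarrow> \<Phi> g \<in> Bij V"
    using hom_in_carrier[OF hom] by simp
  have in_V: "\<And>g x. g \<in> carrier G \<Longrightarrow> x \<in> V \<Longrightarrow> \<Phi> g x \<in> V"
    using Bij Bij_imp_funcset by blast
  show "W \<subseteq> V"
    unfolding W_def using path_subset_V v in_V by blast
  have ends: "v \<in> W \<and> \<Phi> k v \<in> W" if "k \<in> carrier G" for k
    using path_props[OF v in_V[OF that v]] path_nonempty[OF v in_V[OF that v]] that
    unfolding W_def by (metis UN_iff hd_in_set last_in_set)
  then show "v \<in> W" using G by (meson group.is_monoid monoid.one_closed)
  have prefix: "set (path v x) \<subseteq> W" if "x \<in> W" for x
    using that path_prefix_subset[OF v in_V[OF _ v]] unfolding W_def by blast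
  show closed: "set (path x y) \<subseteq> W" if "x \<in> W" "y \<in> W" for x y
    using path_subset_paths_from[OF v] prefix that \<open>W \<subseteq> V\<close> by blast
  show "\<Phi> g x \<in> W" if g: "g \<in> carrier G" and "x \<in> W" for g x
  proof -
    obtain k where k: "k \<in> carrier G" "x \<in> set (path v (\<Phi> k v))"
      using \<open>x \<in> W\<close> unfolding W_def by blast
    have gk: "g \<otimes>\<^bsub>G\<^esub> k \<in> carrier G" using G g k by (simp add: group.is_monoid monoid.m_closed)
    have "map (\<Phi> g) (path v (\<Phi> k v)) = path (\<Phi> g v) (\<Phi> g (\<Phi> k v))"
      by (rule map_path)
        (use pres[OF g] in_V[OF g] Bij[OF g] v in_V[OF k(1) v] in \<open>auto simp: Bij_def bij_betw_def\<close>)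
    also have "\<dots> = path (\<Phi> g v) (\<Phi> (g \<otimes>\<^bsub>G\<^esub> k) v)"
      using hom_BijGroup_mult_apply[OF hom g k(1) v] by simp
    finally have "\<Phi> g x \<in> set (path (\<Phi> g v) (\<Phi> (g \<otimes>\<^bsub>G\<^esub> k) v))"
      using k(2) by (metis image_eqI list.set_map)
    then show ?thesis using closed ends[OF g] ends[OF gk] by blast
  qed
qed

lemma transported_tree_action:
  fixes G :: "('g, 'b) monoid_scheme" and enc :: "'v \<Rightarrow> 'w"
  assumes G: "group G" and act: "tree_action G V E \<Phi>" and noinv: "without_inversion G E \<Phi>"
    and WV: "W \<subseteq> V" and invariant: "\<And>g x. g \<in> carrier G \<Longrightarrow> x \<in> W \<Longrightarrow> \<Phi> g x \<in> W"
    and inj: "inj_on enc W"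
  defines "E' \<equiv> \<lambda>a b. \<exists>x\<in>W. \<exists>y\<in>W. a = enc x \<and> b = enc y \<and> E x y"
    and "\<phi> \<equiv> \<lambda>g. \<lambda>a\<in>enc ` W. enc (\<Phi> g (inv_into W enc a))"
  shows "tree_action G (enc ` W) E' \<phi>" "without_inversion G E' \<phi>"
proof -
  have hom: "\<Phi> \<in> hom G (BijGroup V)"
    and pres: "\<And>g u w. g \<in> carrier G \<Longrightarrow> E u w \<Longrightarrow> E (\<Phi> g u) (\<Phi> g w)"
    using act unfolding tree_action_def by auto
  have \<phi>_enc: "\<phi> g (enc x) = enc (\<Phi> g x)" if "x \<in> W" for g x
    using that inj unfolding \<phi>_def by simp
  have bij_W: "bij_betw (\<Phi> g) W W" if g: "g \<in> carrier G" for g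
  proof -
    have ginv: "inv\<^bsub>G\<^esub> g \<in> carrier G" using G g by simp
    have "inj_on (\<Phi> g) W"
      using hom_in_carrier[OF hom g] WV by (auto simp: Bij_def bij_betw_def dest: inj_on_subset)
    moreover have "W \<subseteq> \<Phi> g ` W"
      using hom_BijGroup_inv_apply[OF G hom g] invariant[OF ginv] WV
      by (metis image_eqI subsetD subsetI)
    ultimately show ?thesis
      using invariant[OF g] by (auto simp: bij_betw_def)
  qed
  have \<phi>_Bij: "\<phi> g \<in> Bij (enc ` W)" if g: "g \<in> carrier G" for g
  proof -
    have "bij_betw (enc \<circ> \<Phi> g \<circ> inv_into W enc) (enc ` W) (enc ` W)"
      using bij_betw_inv_into[OF inj_on_imp_bij_betw[OF inj]] bij_W[OF g] inj_on_imp_bij_betw[OF inj]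
      by (auto intro: bij_betw_trans)
    then show ?thesis
      unfolding \<phi>_def restrict_in_Bij_iff[symmetric] by (simp add: comp_def)
  qed
  have "\<phi> \<in> hom G (BijGroup (enc ` W))"
  proof (rule homI)
    fix g k assume g: "g \<in> carrier G" and k: "k \<in> carrier G"
    have "\<phi> (g \<otimes>\<^bsub>G\<^esub> k) = compose (enc ` W) (\<phi> g) (\<phi> k)"
    proof (rule ext)
      fix a
      show "\<phi> (g \<otimes>\<^bsub>G\<^esub> k) a = compose (enc ` W) (\<phi> g) (\<phi> k) a"
      proof (cases "a \<in> enc ` W")
        case True
        then obtain x where x: "x \<in> W" "a = enc x" by blast
        then show ?thesis
          using hom_BijGroup_mult_apply[OF hom g k] WV invariant[OF k x(1)]
          by (auto simp: \<phi>_enc compose_def)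
      qed (simp add: \<phi>_def compose_def)
    qed
    then show "\<phi> (g \<otimes>\<^bsub>G\<^esub> k) = \<phi> g \<otimes>\<^bsub>BijGroup (enc ` W)\<^esub> \<phi> k"
      using BijGroup_mult \<phi>_Bij g k by metis
  qed (use \<phi>_Bij in simp)
  then show "tree_action G (enc ` W) E' \<phi>"
    unfolding tree_action_def E'_def using invariant pres by (fastforce simp: \<phi>_enc)
  show "without_inversion G E' \<phi>"
    unfolding without_inversion_def E'_def
  proof (intro ballI allI impI notI)
    fix g a b
    assume g: "g \<in> carrier G" and "\<exists>x\<in>W. \<exists>y\<in>W. a = enc x \<and> b = enc y \<and> E x y"
      and swap: "\<phi> g a = b \<and> \<phi> g b = a"
    then obtain x y where xy: "x \<in> W" "y \<in> W" "a = enc x" "b = enc y" "E x y" by blast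
    then have "\<Phi> g x = y \<and> \<Phi> g y = x"
      using swap inj invariant[OF g] by (auto simp: \<phi>_enc dest: inj_onD)
    then show False
      using noinv g xy(5) unfolding without_inversion_def by blast
  qed
qed

text \<open>
  \<^const>\<open>property_FA\<close> only quantifies over trees with vertices in \<open>'g \<times> nat\<close>; the subtree
  spanned by one orbit embeds into that type, which gives fixed points on every tree.\<close>
lemma property_FA_fixed_vertex:
  fixes G :: "('g, 'b) monoid_scheme"
  assumes FA: "property_FA G" and G: "group G"
    and act: "tree_action G V E \<Phi>" and noinv: "without_inversion G E \<Phi>"
  shows "\<exists>v\<in>V. \<forall>g\<in>carrier G. \<Phi> g v = v"
proof -
  obtain v where v: "v \<in> V" using V_nonempty by blast
  define W where "W = (\<Union>k\<in>carrier G. set (path v (\<Phi> k v)))"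
  note hull = orbit_hull[OF G act v, folded W_def]
  obtain enc :: "'v \<Rightarrow> 'g \<times> nat" where inj: "inj_on enc W"
    using inj_on_UN_set_into_index_pairs[where K = "carrier G" and xs = "\<lambda>k. path v (\<Phi> k v)"]
    unfolding W_def by blast
  define E' where "E' = (\<lambda>a b. \<exists>x\<in>W. \<exists>y\<in>W. a = enc x \<and> b = enc y \<and> E x y)"
  define \<phi> where "\<phi> = (\<lambda>g. \<lambda>a\<in>enc ` W. enc (\<Phi> g (inv_into W enc a)))"
  have "is_tree (enc ` W) E'"
    unfolding E'_def using is_tree_image[OF hull(1) _ hull(3) inj] hull(2) by blast
  then obtain a where a: "a \<in> enc ` W" "\<forall>g\<in>carrier G. \<phi> g a = a"
    using FA transported_tree_action[OF G act noinv hull(1) hull(4) inj]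
    unfolding property_FA_def E'_def \<phi>_def by blast
  then obtain x where x: "x \<in> W" "a = enc x" by blast
  have "\<Phi> g x = x" if "g \<in> carrier G" for g
    using a(2) that x hull(4)[OF that x(1)] inj unfolding \<phi>_def by (auto dest: inj_onD)
  then show ?thesis using x(1) hull(1) by blast
qed

end

section \<open>Legally coloured trees and the group \<open>U(M,N)\<close>\<close>

lemma perm_group_compose_closed:
  assumes "perm_group S L" "f \<in> L" "g \<in> L"
  shows "compose S f g \<in> L"
proof -
  have sub: "subgroup L (BijGroup S)" using assms(1) unfolding perm_group_def .
  then have "f \<in> Bij S" "g \<in> Bij S" using assms(2,3) subgroup.subset by fastforce+
  then show ?thesis
    using subgroup.m_closed[OF sub assms(2,3)] by (simp add: BijGroup_mult)
qed

lemma perm_group_id: "perm_group S L \<Longrightarrow> (\<lambda>a\<in>S. a) \<in> L"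
  unfolding perm_group_def using subgroup.one_closed by fastforce

lemma perm_group_subset_Bij: "perm_group S L \<Longrightarrow> L \<subseteq> Bij S"
  unfolding perm_group_def using subgroup.subset by fastforce

lemma group_pgrp: "perm_group S L \<Longrightarrow> group (pgrp S L)"
  unfolding perm_group_def pgrp_def using subgroup.subgroup_is_group group_BijGroup by blast

locale coloured_tree = tree V E
  for \<Omega> \<Delta> :: "'c set" and V :: "'v set" and E and VO VD :: "'v set" and c :: "'v \<times> 'v \<Rightarrow> 'c" +
  assumes legal: "legal_coloured_biregular_tree \<Omega> \<Delta> V E VO VD c"
begin

lemma VO_union_VD: "VO \<union> VD = V" and VO_inter_VD: "VO \<inter> VD = {}"
  using legal unfolding legal_coloured_biregular_tree_def by auto

lemma VO_in_V: "x \<in> VO \<Longrightarrow> x \<in> V" and VD_in_V: "x \<in> VD \<Longrightarrow> x \<in> V"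
  using VO_union_VD by auto

lemma adj_bipartite: "E u v \<Longrightarrow> (u \<in> VO \<and> v \<in> VD) \<or> (u \<in> VD \<and> v \<in> VO)"
  using legal unfolding legal_coloured_biregular_tree_def by blast

lemma adj_VO_iff: "E u v \<Longrightarrow> v \<in> VO \<longleftrightarrow> u \<notin> VO"
  using adj_bipartite VO_inter_VD by blast

definition colours :: "'v \<Rightarrow> 'c set" where
  "colours x = (if x \<in> VO then \<Omega> else \<Delta>)"

lemma colours_VO: "x \<in> VO \<Longrightarrow> colours x = \<Omega>" and colours_VD: "x \<in> VD \<Longrightarrow> colours x = \<Delta>"
  unfolding colours_def using VO_inter_VD by auto

lemma colouring_bij: "x \<in> V \<Longrightarrow> bij_betw c (arcs_out E x) (colours x)"
  using legal VO_union_VD unfolding legal_coloured_biregular_tree_def colours_def by auto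

lemma colour_in_colours: "E x u \<Longrightarrow> c (x, u) \<in> colours x"
  using colouring_bij[of x] adj_in_V unfolding bij_betw_def arcs_out_def by blast

lemma colour_inj:
  assumes "E x u" "E x w" "c (x, u) = c (x, w)"
  shows "u = w"
proof -
  have "inj_on c (arcs_out E x)"
    using colouring_bij[of x] adj_in_V assms(1) unfolding bij_betw_def by blast
  moreover have "(x, u) \<in> arcs_out E x" "(x, w) \<in> arcs_out E x"
    using assms unfolding arcs_out_def by auto
  ultimately show ?thesis using assms(3) by (meson inj_onD prod.inject)
qed

definition nbr :: "'v \<Rightarrow> 'c \<Rightarrow> 'v" where
  "nbr x a = (THE u. E x u \<and> c (x, u) = a)"

lemma nbr_colour: "E x u \<Longrightarrow> nbr x (c (x, u)) = u"
  unfolding nbr_def by (rule the_equality) (use colour_inj in auto)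

lemma nbr_adj: "x \<in> V \<Longrightarrow> a \<in> colours x \<Longrightarrow> E x (nbr x a)"
  and colour_nbr: "x \<in> V \<Longrightarrow> a \<in> colours x \<Longrightarrow> c (x, nbr x a) = a"
proof -
  assume "x \<in> V" "a \<in> colours x"
  then have "a \<in> c ` arcs_out E x"
    using colouring_bij[of x] unfolding bij_betw_def by simp
  then obtain u where "E x u" "c (x, u) = a"
    unfolding arcs_out_def by auto
  then show "E x (nbr x a)" "c (x, nbr x a) = a"
    using nbr_colour by auto
qed

lemma nbr_in_V: "x \<in> V \<Longrightarrow> a \<in> colours x \<Longrightarrow> nbr x a \<in> V"
  using nbr_adj adj_in_V by blast

definition in_colour :: "'v \<Rightarrow> 'c" where
  "in_colour z = (SOME a. a \<in> c ` arcs_in E z)"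

lemma colour_eq_in_colour:
  assumes "E y z"
  shows "c (y, z) = in_colour z"
proof -
  have "card (c ` arcs_in E z) = 1"
    using legal adj_in_V[OF assms] unfolding legal_coloured_biregular_tree_def by blast
  then obtain a where a: "c ` arcs_in E z = {a}"
    using card_1_singletonE by blast
  moreover have "(y, z) \<in> arcs_in E z"
    using assms unfolding arcs_in_def by auto
  ultimately show ?thesis
    unfolding in_colour_def by auto
qed

lemma VO_nonempty:
  assumes "\<Delta> \<noteq> {}"
  obtains v0 where "v0 \<in> VO"
proof -
  obtain x where x: "x \<in> V" using V_nonempty by blast
  show ?thesis
  proof (cases "x \<in> VO")
    case False
    then have "colours x = \<Delta>" unfolding colours_def by simp
    then obtain a where "a \<in> colours x" using assms by blast
    then have "nbr x a \<in> VO" using nbr_adj[OF x] adj_VO_iff False by blast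
    then show ?thesis using that by blast
  qed (use that in blast)
qed

lemma local_action_apply: "a \<in> T \<Longrightarrow> local_action T E c g x a = c (g x, g (nbr x a))"
  unfolding local_action_def nbr_def by simp

lemma local_action_cong:
  assumes "x \<in> V" "\<And>y. y \<in> V \<Longrightarrow> g y = h y"
  shows "local_action (colours x) E c g x = local_action (colours x) E c h x"
proof (rule ext)
  fix a
  show "local_action (colours x) E c g x a = local_action (colours x) E c h x a"
    using assms nbr_in_V[OF assms(1)] by (cases "a \<in> colours x") (auto simp: local_action_def nbr_def)
qed

abbreviation U :: "('c \<Rightarrow> 'c) set \<Rightarrow> ('c \<Rightarrow> 'c) set \<Rightarrow> ('v \<Rightarrow> 'v) set" where
  "U M N \<equiv> U_group \<Omega> \<Delta> M N V E VO VD c"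

lemma U_groupD:
  assumes "g \<in> U M N"
  shows "bij_betw g V V" "\<And>u v. u \<in> V \<Longrightarrow> v \<in> V \<Longrightarrow> E u v \<longleftrightarrow> E (g u) (g v)" "g ` VO = VO"
    "\<And>v. v \<in> VO \<Longrightarrow> local_action \<Omega> E c g v \<in> M" "\<And>v. v \<in> VD \<Longrightarrow> local_action \<Delta> E c g v \<in> N"
  using assms unfolding U_group_def tree_aut_def by auto

lemma U_group_in_V: "g \<in> U M N \<Longrightarrow> x \<in> V \<Longrightarrow> g x \<in> V"
  using U_groupD(1) bij_betw_apply by metis

lemma U_group_adj: "g \<in> U M N \<Longrightarrow> E u v \<Longrightarrow> E (g u) (g v)"
  using U_groupD(2) adj_in_V by metis

lemma U_group_image_VD:
  assumes "g \<in> U M N"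
  shows "g ` VD = VD"
proof -
  have "VD = V - VO" using VO_union_VD VO_inter_VD by auto
  moreover have "g ` (V - VO) = g ` V - g ` VO"
    using U_groupD(1)[OF assms] VO_union_VD by (intro inj_on_image_set_diff) (auto simp: bij_betw_def)
  ultimately show ?thesis
    using U_groupD(1,3)[OF assms] by (simp add: bij_betw_def)
qed

lemma U_group_VO_iff:
  assumes "g \<in> U M N" "x \<in> V"
  shows "g x \<in> VO \<longleftrightarrow> x \<in> VO"
proof -
  have "x \<in> VD \<Longrightarrow> g x \<in> VD" "x \<in> VO \<Longrightarrow> g x \<in> VO"
    using U_group_image_VD[OF assms(1)] U_groupD(3)[OF assms(1)] by blast+
  then show ?thesis using assms(2) VO_union_VD VO_inter_VD by blast
qed

lemma restrict_VD_in_Bij: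
  assumes "g \<in> U M N"
  shows "restrict g VD \<in> Bij VD"
proof -
  have "inj_on g VD"
    using U_groupD(1)[OF assms] VO_union_VD unfolding bij_betw_def
    by (meson inj_on_subset sup.cobounded2)
  then show ?thesis
    using U_group_image_VD[OF assms] by (simp add: restrict_in_Bij_iff bij_betw_def)
qed

lemma local_action_in:
  assumes "g \<in> U M N" "x \<in> V"
  shows "local_action (colours x) E c g x \<in> (if x \<in> VO then M else N)"
  using U_groupD(4,5)[OF assms(1)] assms(2) VO_union_VD unfolding colours_def by auto

lemma U_groupI:
  assumes "g \<in> tree_aut V E" "g ` VO = VO"
    and "\<And>x. x \<in> V \<Longrightarrow> local_action (colours x) E c g x \<in> (if x \<in> VO then M else N)"
  shows "g \<in> U M N"
proof -
  have "local_action \<Omega> E c g x \<in> M" if "x \<in> VO" for x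
    using assms(3)[OF VO_in_V[OF that]] colours_VO[OF that] that by simp
  moreover have "local_action \<Delta> E c g x \<in> N" if "x \<in> VD" for x
  proof -
    have "x \<notin> VO" using that VO_inter_VD by blast
    then show ?thesis using assms(3)[OF VD_in_V[OF that]] colours_VD[OF that] by simp
  qed
  ultimately show ?thesis
    using assms(1,2) unfolding U_group_def by blast
qed

lemma local_action_comp:
  assumes g: "g \<in> U M N" and h: "h \<in> U M N" and x: "x \<in> V"
  shows "local_action (colours x) E c (g \<circ> h) x
       = compose (colours x) (local_action (colours x) E c g (h x)) (local_action (colours x) E c h x)"
proof (rule ext)
  fix a
  show "local_action (colours x) E c (g \<circ> h) x a
       = compose (colours x) (local_action (colours x) E c g (h x)) (local_action (colours x) E c h x) a"
  proof (cases "a \<in> colours x")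
    case True
    have e: "E (h x) (h (nbr x a))" using U_group_adj[OF h nbr_adj[OF x True]] .
    then have "c (h x, h (nbr x a)) \<in> colours x"
      using colour_in_colours U_group_VO_iff[OF h x] unfolding colours_def by metis
    then show ?thesis
      using True e by (simp add: local_action_apply compose_def nbr_colour)
  qed (simp add: local_action_def compose_def)
qed

lemma U_group_comp:
  assumes M: "perm_group \<Omega> M" and N: "perm_group \<Delta> N" and g: "g \<in> U M N" and h: "h \<in> U M N"
  shows "g \<circ> h \<in> U M N"
proof (rule U_groupI)
  have "\<forall>u\<in>V. \<forall>v\<in>V. E u v \<longleftrightarrow> E ((g \<circ> h) u) ((g \<circ> h) v)"
    using U_groupD(2)[OF h] U_groupD(2)[OF g U_group_in_V[OF h] U_group_in_V[OF h]] by simp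
  then show "g \<circ> h \<in> tree_aut V E"
    using U_groupD(1)[OF g] U_groupD(1)[OF h] unfolding tree_aut_def by (auto intro: bij_betw_trans)
  show "(g \<circ> h) ` VO = VO"
    using U_groupD(3)[OF g] U_groupD(3)[OF h] by (metis image_comp)
  fix x assume x: "x \<in> V"
  have "colours (h x) = colours x" "h x \<in> VO \<longleftrightarrow> x \<in> VO"
    using U_group_VO_iff[OF h x] unfolding colours_def by auto
  then show "local_action (colours x) E c (g \<circ> h) x \<in> (if x \<in> VO then M else N)"
    using local_action_comp[OF g h x] local_action_in[OF g U_group_in_V[OF h x]] local_action_in[OF h x]
      perm_group_compose_closed[OF M] perm_group_compose_closed[OF N]
    by (cases "x \<in> VO") (simp_all add: colours_def)
qed

text \<open>
  Elements of \<open>U(M,N)\<close> are determined by their restriction to \<open>V\<^sub>\<Delta>\<close>: a vertex of \<open>V\<^sub>\<Omega>\<close> is the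
  unique common neighbour of two of its neighbours.\<close>
lemma U_group_eq_if_eq_on_VD:
  assumes two: "\<exists>a\<in>\<Omega>. \<exists>b\<in>\<Omega>. a \<noteq> b"
    and g: "g \<in> U M N" and h: "h \<in> U M' N'"
    and eq: "\<And>x. x \<in> VD \<Longrightarrow> g x = h x" and x: "x \<in> V"
  shows "g x = h x"
proof (cases "x \<in> VO")
  case True
  obtain a b where ab: "a \<in> colours x" "b \<in> colours x" "a \<noteq> b"
    using two colours_VO[OF True] by auto
  define u w where "u = nbr x a" and "w = nbr x b"
  have uw: "E x u" "E x w" "u \<noteq> w"
    using nbr_adj[OF x] colour_nbr[OF x] ab unfolding u_def w_def by metis+
  have "u \<in> VD" "w \<in> VD" using adj_bipartite uw True VO_inter_VD by blast+
  then have e: "E (g x) (g u)" "E (g x) (g w)" "E (h x) (g u)" "E (h x) (g w)"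
    using U_group_adj[OF g uw(1)] U_group_adj[OF g uw(2)]
      U_group_adj[OF h uw(1)] U_group_adj[OF h uw(2)] eq
    by simp_all
  have "g u \<noteq> g w"
    using U_groupD(1)[OF g] uw adj_in_V unfolding bij_betw_def by (meson inj_onD)
  then have "[g u, g x, g w] = path (g u) (g w)" "[g u, h x, g w] = path (g u) (g w)"
    using e adj_sym adj_in_V by (auto intro!: path_unique)
  then show ?thesis by (metis list.inject)
qed (use eq x VO_union_VD in auto)

end

section \<open>Addresses and the lift of \<open>M\<close> into \<open>U(M,N)\<close>\<close>

primrec follow :: "('v \<Rightarrow> 'c \<Rightarrow> 'v) \<Rightarrow> 'v \<Rightarrow> 'c list \<Rightarrow> 'v list" where
  "follow nb x [] = [x]"
| "follow nb x (a # w) = x # follow nb (nb x a) w"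

fun arc_colours :: "('v \<times> 'v \<Rightarrow> 'c) \<Rightarrow> 'v list \<Rightarrow> 'c list" where
  "arc_colours c (x # y # zs) = c (x, y) # arc_colours c (y # zs)"
| "arc_colours c _ = []"

primrec map_alternate :: "('c \<Rightarrow> 'c) \<Rightarrow> bool \<Rightarrow> 'c list \<Rightarrow> 'c list" where
  "map_alternate m p [] = []"
| "map_alternate m p (a # w) = (if p then m a else a) # map_alternate m (\<not> p) w"

primrec alternating :: "'c set \<Rightarrow> 'c set \<Rightarrow> bool \<Rightarrow> 'c list \<Rightarrow> bool" where
  "alternating A B p [] = True"
| "alternating A B p (a # w) = (a \<in> (if p then A else B) \<and> alternating A B (\<not> p) w)"

text \<open>
  No letter equals the one two places before it, \<open>q\<close> counting as the letter before the word.
  Since all arcs into a vertex have the same colour, this says that the followed walk does not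
  backtrack, \<open>q\<close> being the colour of the arcs into its start.\<close>
fun non_backtracking :: "'c \<Rightarrow> 'c list \<Rightarrow> bool" where
  "non_backtracking q (a # b # r) = (b \<noteq> q \<and> non_backtracking a (b # r))"
| "non_backtracking q _ = True"

lemma length_map_alternate [simp]: "length (map_alternate m p w) = length w"
  by (induction w arbitrary: p) auto

lemma map_alternate_append_single:
  "map_alternate m p (w @ [a]) = map_alternate m p w @ [if p = even (length w) then m a else a]"
  by (induction w arbitrary: p) auto

lemma map_alternate_compose:
  "m2 ` A \<subseteq> A \<Longrightarrow> alternating A B p w
     \<Longrightarrow> map_alternate (compose A m1 m2) p w = map_alternate m1 p (map_alternate m2 p w)"
  by (induction w arbitrary: p) (auto simp: compose_def)

lemma map_alternate_id: "alternating A B p w \<Longrightarrow> map_alternate (\<lambda>a\<in>A. a) p w = w"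
  by (induction w arbitrary: p) auto

lemma alternating_map_alternate:
  "m ` A \<subseteq> A \<Longrightarrow> alternating A B p w \<Longrightarrow> alternating A B p (map_alternate m p w)"
  by (induction w arbitrary: p) auto

lemma non_backtracking_map_alternate:
  assumes "inj_on m A" "m ` A \<subseteq> A"
  shows "alternating A B p w \<Longrightarrow> q \<in> (if p then B else A)
    \<Longrightarrow> non_backtracking (if p then q else m q) (map_alternate m p w) = non_backtracking q w"
proof (induction w arbitrary: p q rule: induct_list012)
  case (3 a b r)
  have ab: "a \<in> (if p then A else B)" "b \<in> (if p then B else A)" using 3 by auto
  have IH: "non_backtracking (if \<not> p then a else m a) (map_alternate m (\<not> p) (b # r))
      = non_backtracking a (b # r)"
    using 3(2)[of "\<not> p" a] 3(3) ab by auto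
  have "((if \<not> p then m b else b) \<noteq> (if p then q else m q)) = (b \<noteq> q)"
    using ab 3(4) assms(1) by (cases p) (auto dest: inj_onD)
  then show ?case using IH by (cases p) auto
qed auto

lemma follow_nonempty [simp]: "follow nb x w \<noteq> []"
  by (cases w) auto

lemma hd_follow [simp]: "hd (follow nb x w) = x"
  by (cases w) auto

lemma follow_append_single: "follow nb x (w @ [a]) = follow nb x w @ [nb (last (follow nb x w)) a]"
  by (induction w arbitrary: x) auto

lemma arc_colours_append_single:
  "xs \<noteq> [] \<Longrightarrow> arc_colours c (xs @ [y]) = arc_colours c xs @ [c (last xs, y)]"
  by (induction xs rule: induct_list012) auto

lemma length_arc_colours: "length (arc_colours c xs) = length xs - 1"
  by (induction xs rule: induct_list012) auto

context coloured_tree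
begin

lemma nbr_VO_iff: "x \<in> V \<Longrightarrow> a \<in> colours x \<Longrightarrow> nbr x a \<in> VO \<longleftrightarrow> x \<notin> VO"
  using nbr_adj adj_VO_iff by blast

lemma nbr_facts:
  assumes "x \<in> V" "alternating \<Omega> \<Delta> (x \<in> VO) (a # w)"
  shows "E x (nbr x a)" "c (x, nbr x a) = a" "nbr x a \<in> V" "alternating \<Omega> \<Delta> (nbr x a \<in> VO) w"
proof -
  have a: "a \<in> colours x" using assms(2) unfolding colours_def by simp
  show "E x (nbr x a)" "c (x, nbr x a) = a" "nbr x a \<in> V"
    using nbr_adj[OF assms(1) a] colour_nbr[OF assms(1) a] nbr_in_V[OF assms(1) a] by auto
  show "alternating \<Omega> \<Delta> (nbr x a \<in> VO) w"
    using assms(2) nbr_VO_iff[OF assms(1) a] by simp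
qed

lemma walk_follow:
  "x \<in> V \<Longrightarrow> alternating \<Omega> \<Delta> (x \<in> VO) w \<Longrightarrow> walk E (follow nbr x w) \<and> last (follow nbr x w) \<in> V
     \<and> (last (follow nbr x w) \<in> VO \<longleftrightarrow> ((x \<in> VO) = even (length w)))"
proof (induction w arbitrary: x)
  case (Cons a w)
  note y = nbr_facts[OF Cons(2,3)]
  have "walk E (x # follow nbr (nbr x a) w)"
    using Cons(1)[OF y(3,4)] y(1) by (cases w) auto
  then show ?case
    using Cons(1)[OF y(3,4)] nbr_VO_iff Cons(2,3) unfolding colours_def by auto
qed simp

lemma reduced_follow_iff:
  "x \<in> V \<Longrightarrow> alternating \<Omega> \<Delta> (x \<in> VO) w \<Longrightarrow> reduced (follow nbr x w) \<longleftrightarrow> non_backtracking (in_colour x) w"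
proof (induction w arbitrary: x rule: induct_list012)
  case (3 a b r)
  let ?y = "nbr x a"
  note y = nbr_facts[OF 3(3,4)]
  note z = nbr_facts[OF y(3,4)]
  have in_x: "c (?y, x) = in_colour x"
    using colour_eq_in_colour[OF adj_sym[OF y(1)]] .
  have "x \<noteq> nbr ?y b \<longleftrightarrow> b \<noteq> in_colour x"
    using in_x z(2) nbr_colour[OF adj_sym[OF y(1)]] by metis
  moreover have "in_colour ?y = a"
    using colour_eq_in_colour[OF y(1)] y(2) by simp
  ultimately show ?case
    using 3(2)[OF y(3,4)] by (cases r) auto
qed simp_all

lemma arc_colours_follow: "x \<in> V \<Longrightarrow> alternating \<Omega> \<Delta> (x \<in> VO) w \<Longrightarrow> arc_colours c (follow nbr x w) = w"
proof (induction w arbitrary: x)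
  case (Cons a w)
  note y = nbr_facts[OF Cons(2,3)]
  have "follow nbr (nbr x a) w = nbr x a # tl (follow nbr (nbr x a) w)"
    by (cases w) auto
  then show ?case
    using Cons(1)[OF y(3,4)] y(2) by (metis arc_colours.simps(1) follow.simps(2))
qed simp

lemma follow_arc_colours: "walk E xs \<Longrightarrow> follow nbr (hd xs) (arc_colours c xs) = xs"
  by (induction xs rule: induct_list012) (auto simp: nbr_colour)

lemma alternating_arc_colours:
  "walk E xs \<Longrightarrow> hd xs \<in> V \<Longrightarrow> alternating \<Omega> \<Delta> (hd xs \<in> VO) (arc_colours c xs)"
proof (induction xs rule: induct_list012)
  case (3 x y zs)
  then have e: "E x y" by simp
  then have "y \<in> V" "y \<in> VO \<longleftrightarrow> x \<notin> VO" using adj_in_V adj_VO_iff by blast+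
  then show ?case
    using 3 colour_in_colours[OF e] unfolding colours_def by auto
qed auto

lemma non_backtracking_arc_colours:
  "walk E xs \<Longrightarrow> reduced xs \<Longrightarrow> hd xs \<in> V \<Longrightarrow> non_backtracking (in_colour (hd xs)) (arc_colours c xs)"
  using reduced_follow_iff[OF _ alternating_arc_colours] follow_arc_colours by metis

lemma last_arc_colours:
  "walk E xs \<Longrightarrow> 2 \<le> length xs \<Longrightarrow> last (arc_colours c xs) = in_colour (last xs)"
proof (induction xs rule: induct_list012)
  case (3 x y zs)
  then show ?case
    using colour_eq_in_colour by (cases zs) auto
qed auto

end

locale rooted_coloured_tree = coloured_tree \<Omega> \<Delta> V E VO VD c
  for \<Omega> \<Delta> :: "'c set" and V :: "'v set" and E and VO VD :: "'v set" and c :: "'v \<times> 'v \<Rightarrow> 'c" +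
  fixes v0 :: 'v
  assumes root_in_VO: "v0 \<in> VO" and Omega_nonempty: "\<Omega> \<noteq> {}"
begin

lemma root_in_V: "v0 \<in> V"
  using root_in_VO VO_in_V by blast

definition address :: "'v \<Rightarrow> 'c list" where
  "address x = arc_colours c (path v0 x)"

definition vertex_at :: "'c list \<Rightarrow> 'v" where
  "vertex_at w = last (follow nbr v0 w)"

definition addresses :: "'c list set" where
  "addresses = {w. alternating \<Omega> \<Delta> True w \<and> non_backtracking (in_colour v0) w}"

text \<open>
  The letters of an address in even positions are the colours of arcs leaving vertices of
  \<open>V\<^sub>\<Omega>\<close>; \<open>lift m\<close> applies \<open>m\<close> to exactly these letters.\<close>
definition lift :: "('c \<Rightarrow> 'c) \<Rightarrow> 'v \<Rightarrow> 'v" where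
  "lift m x = vertex_at (map_alternate m True (address x))"

lemma in_colour_root: "in_colour v0 \<in> \<Delta>"
proof -
  obtain a where "a \<in> colours v0" using Omega_nonempty colours_VO[OF root_in_VO] by blast
  then have e: "E v0 (nbr v0 a)" using nbr_adj[OF root_in_V] by blast
  then have "nbr v0 a \<in> VD" using adj_bipartite root_in_VO VO_inter_VD by blast
  then show ?thesis
    using colour_in_colours[OF adj_sym[OF e]] colours_VD colour_eq_in_colour[OF adj_sym[OF e]] by simp
qed

lemma address_in_addresses: "x \<in> V \<Longrightarrow> address x \<in> addresses"
  unfolding address_def addresses_def
  using alternating_arc_colours[OF path_walk[OF root_in_V]]
    non_backtracking_arc_colours[OF path_walk[OF root_in_V] path_reduced[OF root_in_V]]
    path_hd[OF root_in_V] root_in_VO root_in_V by auto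

lemma vertex_at_address: "x \<in> V \<Longrightarrow> vertex_at (address x) = x"
  unfolding vertex_at_def address_def
  using follow_arc_colours[OF path_walk[OF root_in_V]] path_hd[OF root_in_V] path_last[OF root_in_V]
  by metis

lemma follow_address:
  assumes "w \<in> addresses"
  shows "walk E (follow nbr v0 w)" "reduced (follow nbr v0 w)" "vertex_at w \<in> V"
    "vertex_at w \<in> VO \<longleftrightarrow> even (length w)"
proof -
  have w: "alternating \<Omega> \<Delta> (v0 \<in> VO) w" "non_backtracking (in_colour v0) w"
    using assms root_in_VO unfolding addresses_def by auto
  show "walk E (follow nbr v0 w)" "vertex_at w \<in> V" "vertex_at w \<in> VO \<longleftrightarrow> even (length w)"
    using walk_follow[OF root_in_V w(1)] root_in_VO unfolding vertex_at_def by auto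
  show "reduced (follow nbr v0 w)"
    using reduced_follow_iff[OF root_in_V w(1)] w(2) by simp
qed

lemma address_vertex_at:
  assumes "w \<in> addresses"
  shows "address (vertex_at w) = w"
proof -
  have "follow nbr v0 w = path v0 (vertex_at w)"
    using path_unique[OF root_in_V follow_address(3)[OF assms] follow_address(1,2)[OF assms]]
    unfolding vertex_at_def by simp
  moreover have "arc_colours c (follow nbr v0 w) = w"
    using arc_colours_follow[OF root_in_V, of w] assms root_in_VO unfolding addresses_def by simp
  ultimately show ?thesis unfolding address_def by simp
qed

lemma VO_iff_even_address: "x \<in> V \<Longrightarrow> x \<in> VO \<longleftrightarrow> even (length (address x))"
  using follow_address(4)[OF address_in_addresses] vertex_at_address by metis

lemma in_colour_eq_last_address:
  assumes "x \<in> V" "address x \<noteq> []"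
  shows "in_colour x = last (address x)"
proof -
  have "length (arc_colours c (path v0 x)) \<noteq> 0"
    using assms(2) unfolding address_def by simp
  then have "length (path v0 x) - 1 \<noteq> 0"
    using length_arc_colours[of c "path v0 x"] by simp
  then have "2 \<le> length (path v0 x)" by linarith
  then show ?thesis
    using last_arc_colours[OF path_walk[OF root_in_V assms(1)]] path_last[OF root_in_V assms(1)]
    unfolding address_def by simp
qed

lemma map_alternate_in_addresses:
  assumes "m \<in> Bij \<Omega>" "w \<in> addresses"
  shows "map_alternate m True w \<in> addresses"
  using alternating_map_alternate non_backtracking_map_alternate[of m \<Omega> \<Delta> True w "in_colour v0"]
    Bij_inj_on_image[OF assms(1)] assms(2) in_colour_root unfolding addresses_def by auto

lemma address_lift: "m \<in> Bij \<Omega> \<Longrightarrow> x \<in> V \<Longrightarrow> address (lift m x) = map_alternate m True (address x)"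
  unfolding lift_def using address_vertex_at map_alternate_in_addresses address_in_addresses by blast

lemma lift_in_V: "m \<in> Bij \<Omega> \<Longrightarrow> x \<in> V \<Longrightarrow> lift m x \<in> V"
  unfolding lift_def using follow_address(3) map_alternate_in_addresses address_in_addresses by blast

lemma lift_VO_iff: "m \<in> Bij \<Omega> \<Longrightarrow> x \<in> V \<Longrightarrow> lift m x \<in> VO \<longleftrightarrow> x \<in> VO"
  unfolding lift_def using follow_address(4)[OF map_alternate_in_addresses[OF _ address_in_addresses]]
    VO_iff_even_address by simp

lemma lift_root: "lift m v0 = v0"
  using path_self[OF root_in_V] unfolding lift_def address_def vertex_at_def by simp

lemma lift_compose:
  assumes "m1 \<in> Bij \<Omega>" "m2 \<in> Bij \<Omega>" "x \<in> V"
  shows "lift (compose \<Omega> m1 m2) x = lift m1 (lift m2 x)"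
  using address_lift[OF assms(2,3)] map_alternate_compose[of m2 \<Omega> \<Delta> True "address x" m1]
    Bij_inj_on_image[OF assms(2)] address_in_addresses[OF assms(3)]
  unfolding lift_def[of m1] lift_def[of "compose \<Omega> m1 m2"] addresses_def by simp

lemma lift_id: "x \<in> V \<Longrightarrow> lift (\<lambda>a\<in>\<Omega>. a) x = x"
  unfolding lift_def using map_alternate_id address_in_addresses vertex_at_address
  unfolding addresses_def by fastforce

lemma lift_inv:
  assumes "m \<in> Bij \<Omega>" "x \<in> V"
  shows "lift m (lift (inv\<^bsub>BijGroup \<Omega>\<^esub> m) x) = x" "lift (inv\<^bsub>BijGroup \<Omega>\<^esub> m) (lift m x) = x"
proof -
  interpret B: group "BijGroup \<Omega>" by (rule group_BijGroup)
  have m: "m \<in> carrier (BijGroup \<Omega>)" using assms by simp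
  have inv: "inv\<^bsub>BijGroup \<Omega>\<^esub> m \<in> Bij \<Omega>" using B.inv_closed[OF m] by simp
  have "compose \<Omega> m (inv\<^bsub>BijGroup \<Omega>\<^esub> m) = (\<lambda>a\<in>\<Omega>. a)" "compose \<Omega> (inv\<^bsub>BijGroup \<Omega>\<^esub> m) m = (\<lambda>a\<in>\<Omega>. a)"
    using B.r_inv[OF m] B.l_inv[OF m] BijGroup_mult[OF assms(1) inv] BijGroup_mult[OF inv assms(1)]
    by simp_all
  then show "lift m (lift (inv\<^bsub>BijGroup \<Omega>\<^esub> m) x) = x" "lift (inv\<^bsub>BijGroup \<Omega>\<^esub> m) (lift m x) = x"
    using lift_compose[OF assms(1) inv assms(2)] lift_compose[OF inv assms(1,2)] lift_id[OF assms(2)]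
    by simp_all
qed

lemma bij_betw_lift:
  assumes "m \<in> Bij \<Omega>"
  shows "bij_betw (lift m) V V"
proof -
  have "inv\<^bsub>BijGroup \<Omega>\<^esub> m \<in> Bij \<Omega>"
    using group.inv_closed[OF group_BijGroup] assms by fastforce
  then show ?thesis
    by (intro bij_betw_byWitness[of V "lift (inv\<^bsub>BijGroup \<Omega>\<^esub> m)"])
      (use lift_inv[OF assms] lift_in_V assms in auto)
qed

lemma lift_child:
  assumes m: "m \<in> Bij \<Omega>" and x: "x \<in> V" and e: "E x u" and child: "path v0 u = path v0 x @ [u]"
  shows "lift m u = nbr (lift m x) (if x \<in> VO then m (c (x, u)) else c (x, u))"
    "(if x \<in> VO then m (c (x, u)) else c (x, u)) \<in> colours (lift m x)"
proof -
  let ?a = "c (x, u)"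
  have "address u = address x @ [?a]"
    unfolding address_def child
    using arc_colours_append_single[OF path_nonempty[OF root_in_V x]] path_last[OF root_in_V x] by simp
  then show "lift m u = nbr (lift m x) (if x \<in> VO then m ?a else ?a)"
    using VO_iff_even_address[OF x] unfolding lift_def vertex_at_def
    by (simp add: map_alternate_append_single follow_append_single)
  show "(if x \<in> VO then m ?a else ?a) \<in> colours (lift m x)"
    using colour_in_colours[OF e] Bij_inj_on_image[OF m] lift_VO_iff[OF m x]
    unfolding colours_def by auto
qed

lemma lift_adj:
  assumes m: "m \<in> Bij \<Omega>" and e: "E x y"
  shows "E (lift m x) (lift m y)"
proof -
  have "x \<in> V" "y \<in> V" using adj_in_V e by auto
  then consider "path v0 y = path v0 x @ [y]" | "path v0 x = path v0 y @ [x]"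
    using path_adjacent_cases[OF root_in_V e] by blast
  then show ?thesis
  proof cases
    case 1
    then show ?thesis
      using lift_child[OF m \<open>x \<in> V\<close> e] nbr_adj[OF lift_in_V[OF m \<open>x \<in> V\<close>]] by simp
  next
    case 2
    then show ?thesis
      using lift_child[OF m \<open>y \<in> V\<close> adj_sym[OF e]] nbr_adj[OF lift_in_V[OF m \<open>y \<in> V\<close>]] adj_sym by simp
  qed
qed

lemma colour_lift:
  assumes m: "m \<in> Bij \<Omega>" and x: "x \<in> V" and a: "a \<in> colours x"
  shows "c (lift m x, lift m (nbr x a)) = (if x \<in> VO then m a else a)"
proof -
  let ?u = "nbr x a"
  have e: "E x ?u" "c (x, ?u) = a" using nbr_adj[OF x a] colour_nbr[OF x a] by auto
  have u: "?u \<in> V" using adj_in_V e by blast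
  consider "path v0 ?u = path v0 x @ [?u]" | "path v0 x = path v0 ?u @ [x]"
    using path_adjacent_cases[OF root_in_V e(1)] by blast
  then show ?thesis
  proof cases
    case 1
    then show ?thesis
      using lift_child[OF m x e(1)] nbr_adj[OF lift_in_V[OF m x]] colour_nbr[OF lift_in_V[OF m x]] e(2)
      by simp
  next
    case 2
    \<comment> \<open>Towards the root the arc colour is the in-colour of the parent, the last letter of its address.\<close>
    have lhs: "c (lift m x, lift m ?u) = in_colour (lift m ?u)"
      using colour_eq_in_colour[OF lift_adj[OF m e(1)]] .
    have a_in: "a = in_colour ?u" using colour_eq_in_colour[OF e(1)] e(2) by simp
    have address_x: "address x = address ?u @ [c (?u, x)]"
      unfolding address_def 2
      using arc_colours_append_single[OF path_nonempty[OF root_in_V u]] path_last[OF root_in_V u] by simp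
    show ?thesis
    proof (cases "address ?u = []")
      case True
      then have "?u = v0" using vertex_at_address[OF u] unfolding vertex_at_def by simp
      moreover have "x \<notin> VO" using adj_VO_iff[OF e(1)] root_in_VO calculation by blast
      ultimately show ?thesis using lhs a_in lift_root by simp
    next
      case False
      then obtain w d where wd: "address ?u = w @ [d]" by (metis rev_exhaust)
      have "in_colour (lift m ?u) = last (map_alternate m True (address ?u))"
        using in_colour_eq_last_address[OF lift_in_V[OF m u]] address_lift[OF m u] False
        by (metis length_0_conv length_map_alternate)
      also have "\<dots> = (if even (length w) then m d else d)"
        using wd by (simp add: map_alternate_append_single)
      finally show ?thesis
        using lhs a_in in_colour_eq_last_address[OF u False] wd VO_iff_even_address[OF x] address_x
        by simp
    qed
  qed
qed

lemma lift_in_tree_aut: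
  assumes m: "m \<in> Bij \<Omega>"
  shows "lift m \<in> tree_aut V E"
proof -
  have "inv\<^bsub>BijGroup \<Omega>\<^esub> m \<in> Bij \<Omega>"
    using group.inv_closed[OF group_BijGroup] m by fastforce
  then have "E u v \<longleftrightarrow> E (lift m u) (lift m v)" if "u \<in> V" "v \<in> V" for u v
    using lift_adj[OF m, of u v] lift_adj[of "inv\<^bsub>BijGroup \<Omega>\<^esub> m" "lift m u" "lift m v"]
      lift_inv(2)[OF m] that
    by auto
  then show ?thesis
    unfolding tree_aut_def using bij_betw_lift[OF m] by simp
qed

lemma lift_image_VO:
  assumes m: "m \<in> Bij \<Omega>"
  shows "lift m ` VO = VO"
proof
  show "lift m ` VO \<subseteq> VO" using lift_VO_iff[OF m] VO_in_V by blast
  show "VO \<subseteq> lift m ` VO"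
  proof
    fix x assume x: "x \<in> VO"
    have "inv\<^bsub>BijGroup \<Omega>\<^esub> m \<in> Bij \<Omega>"
      using group.inv_closed[OF group_BijGroup] m by fastforce
    then have "lift (inv\<^bsub>BijGroup \<Omega>\<^esub> m) x \<in> VO"
      using lift_VO_iff VO_in_V[OF x] x by blast
    then show "x \<in> lift m ` VO"
      using lift_inv(1)[OF m VO_in_V[OF x]] by (metis image_eqI)
  qed
qed

lemma local_action_lift:
  assumes m: "m \<in> Bij \<Omega>" and x: "x \<in> V"
  shows "local_action (colours x) E c (lift m) x = (if x \<in> VO then m else (\<lambda>a\<in>\<Delta>. a))"
proof (rule ext)
  fix a
  show "local_action (colours x) E c (lift m) x a = (if x \<in> VO then m else (\<lambda>a\<in>\<Delta>. a)) a"
  proof (cases "a \<in> colours x")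
    case True
    then show ?thesis
      using local_action_apply[OF True] colour_lift[OF m x True] unfolding colours_def by auto
  next
    case False
    then show ?thesis
      using m unfolding colours_def local_action_def by (auto simp: Bij_def extensional_def)
  qed
qed

lemma lift_in_U:
  assumes M: "perm_group \<Omega> M" and N: "perm_group \<Delta> N" and m: "m \<in> M"
  shows "lift m \<in> U M N"
proof -
  have mB: "m \<in> Bij \<Omega>" using perm_group_subset_Bij[OF M] m by blast
  show ?thesis
    using lift_in_tree_aut[OF mB] lift_image_VO[OF mB] local_action_lift[OF mB] m perm_group_id[OF N]
    by (intro U_groupI) auto
qed

lemma restrict_lift_hom:
  assumes M: "perm_group \<Omega> M" and N: "perm_group \<Delta> N"
  shows "(\<lambda>m. restrict (lift m) VD) \<in> hom (pgrp \<Omega> M) (box_product \<Omega> \<Delta> M N V E VO VD c)"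
proof (rule homI)
  fix m assume "m \<in> carrier (pgrp \<Omega> M)"
  then show "restrict (lift m) VD \<in> carrier (box_product \<Omega> \<Delta> M N V E VO VD c)"
    using lift_in_U[OF M N] by (simp add: pgrp_def box_product_def box_product_set_def)
next
  fix m1 m2 assume "m1 \<in> carrier (pgrp \<Omega> M)" "m2 \<in> carrier (pgrp \<Omega> M)"
  then have m: "m1 \<in> M" "m2 \<in> M" by (simp_all add: pgrp_def)
  then have mB: "m1 \<in> Bij \<Omega>" "m2 \<in> Bij \<Omega>" using perm_group_subset_Bij[OF M] by auto
  have "restrict (lift (compose \<Omega> m1 m2)) VD = compose VD (restrict (lift m1) VD) (restrict (lift m2) VD)"
  proof (rule ext)
    fix x
    show "restrict (lift (compose \<Omega> m1 m2)) VD x = compose VD (restrict (lift m1) VD) (restrict (lift m2) VD) x"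
    proof (cases "x \<in> VD")
      case True
      then have "lift m2 x \<in> VD" using U_group_image_VD[OF lift_in_U[OF M N m(2)]] by blast
      then show ?thesis using True lift_compose[OF mB VD_in_V[OF True]] by (simp add: compose_def)
    qed (simp add: compose_def)
  qed
  then show "restrict (lift (m1 \<otimes>\<^bsub>pgrp \<Omega> M\<^esub> m2)) VD
      = restrict (lift m1) VD \<otimes>\<^bsub>box_product \<Omega> \<Delta> M N V E VO VD c\<^esub> restrict (lift m2) VD"
    using mB restrict_VD_in_Bij[OF lift_in_U[OF M N m(1)]] restrict_VD_in_Bij[OF lift_in_U[OF M N m(2)]]
    by (simp add: pgrp_def box_product_def BijGroup_mult)
qed

lemma restrict_lift_nontrivial:
  assumes "nontrivial_perm_group \<Omega> M"
  obtains m where "m \<in> M" "restrict (lift m) VD \<noteq> (\<lambda>x\<in>VD. x)"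
proof -
  have M: "perm_group \<Omega> M" using assms unfolding nontrivial_perm_group_def by simp
  then obtain m where m: "m \<in> M" "m \<noteq> (\<lambda>a\<in>\<Omega>. a)"
    using assms perm_group_id unfolding nontrivial_perm_group_def by fastforce
  have mB: "m \<in> Bij \<Omega>" using perm_group_subset_Bij[OF M] m(1) by blast
  have "\<exists>a\<in>\<Omega>. m a \<noteq> a"
    using m(2) mB unfolding Bij_def by (fastforce simp: extensional_def fun_eq_iff)
  then obtain a where a: "a \<in> \<Omega>" "m a \<noteq> a" by blast
  then have aS: "a \<in> colours v0" using colours_VO[OF root_in_VO] by simp
  let ?u = "nbr v0 a"
  have "?u \<in> VD"
    using adj_bipartite nbr_adj[OF root_in_V aS] root_in_VO VO_inter_VD by blast
  moreover have "lift m ?u \<noteq> ?u"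
    using colour_lift[OF mB root_in_V aS] lift_root root_in_VO colour_nbr[OF root_in_V aS] a(2) by force
  ultimately have "restrict (lift m) VD ?u \<noteq> (\<lambda>x\<in>VD. x) ?u" by simp
  then show ?thesis using that m(1) by metis
qed

end

section \<open>Actions through \<open>U(M,N)\<close> of groups with property (FA)\<close>

lemma nontrivial_hom_quotient_iso_subgroup:
  assumes G: "group G" and H: "group H" and h: "h \<in> hom G H"
    and nontrivial: "g \<in> carrier G" "h g \<noteq> \<one>\<^bsub>H\<^esub>"
  shows "\<exists>K S. K \<lhd> G \<and> K \<noteq> carrier G \<and> subgroup S H \<and> G Mod K \<cong> H\<lparr>carrier := S\<rparr>"
proof -
  interpret group_hom G H h using G H h unfolding group_hom_def group_hom_axioms_def by simp
  let ?S = "h ` carrier G"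
  have S: "subgroup ?S H" using img_is_subgroup .
  interpret image: group_hom G "H\<lparr>carrier := ?S\<rparr>" h
    using G subgroup.subgroup_is_group[OF S H] h
    unfolding group_hom_def group_hom_axioms_def hom_def by auto
  have "G Mod kernel G H h \<cong> H\<lparr>carrier := ?S\<rparr>"
    using image.FactGroup_iso by (simp add: kernel_def)
  moreover have "kernel G H h \<noteq> carrier G"
    using nontrivial unfolding kernel_def by auto
  ultimately show ?thesis using normal_kernel S by blast
qed

context coloured_tree
begin

definition acts_through_U ::
  "('g, 'b) monoid_scheme \<Rightarrow> ('c \<Rightarrow> 'c) set \<Rightarrow> ('c \<Rightarrow> 'c) set \<Rightarrow> ('g \<Rightarrow> 'v \<Rightarrow> 'v) \<Rightarrow> bool" where
  "acts_through_U G M N A \<longleftrightarrow> (\<forall>g\<in>carrier G. A g \<in> U M N)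
     \<and> (\<forall>g\<in>carrier G. \<forall>h\<in>carrier G. \<forall>x\<in>V. A (g \<otimes>\<^bsub>G\<^esub> h) x = A g (A h x))"

lemma acts_through_UD:
  assumes "acts_through_U G M N A" "g \<in> carrier G"
  shows "A g \<in> U M N" "\<And>h x. h \<in> carrier G \<Longrightarrow> x \<in> V \<Longrightarrow> A (g \<otimes>\<^bsub>G\<^esub> h) x = A g (A h x)"
  using assms unfolding acts_through_U_def by auto

lemma acts_through_U_one:
  assumes G: "group G" and A: "acts_through_U G M N A" and x: "x \<in> V"
  shows "A \<one>\<^bsub>G\<^esub> x = x"
proof -
  have one: "\<one>\<^bsub>G\<^esub> \<in> carrier G" using monoid.one_closed[OF group.is_monoid[OF G]] .
  have "A \<one>\<^bsub>G\<^esub> (A \<one>\<^bsub>G\<^esub> x) = A (\<one>\<^bsub>G\<^esub> \<otimes>\<^bsub>G\<^esub> \<one>\<^bsub>G\<^esub>) x"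
    by (rule acts_through_UD(2)[OF A one one x, symmetric])
  also have "\<dots> = A \<one>\<^bsub>G\<^esub> x"
    using monoid.l_one[OF group.is_monoid[OF G] one] by simp
  finally have "A \<one>\<^bsub>G\<^esub> (A \<one>\<^bsub>G\<^esub> x) = A \<one>\<^bsub>G\<^esub> x" .
  then show ?thesis
    using U_groupD(1)[OF acts_through_UD(1)[OF A one]] U_group_in_V[OF acts_through_UD(1)[OF A one] x] x
    unfolding bij_betw_def by (meson inj_onD)
qed

text \<open>The chosen preimages multiply correctly because restriction to \<open>V\<^sub>\<Delta>\<close> is injective on \<open>U(M,N)\<close>.\<close>
lemma box_product_hom_lifts_to_U:
  fixes G :: "('g, 'b) monoid_scheme"
  assumes two: "\<exists>a\<in>\<Omega>. \<exists>b\<in>\<Omega>. a \<noteq> b" and M: "perm_group \<Omega> M" and N: "perm_group \<Delta> N"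
    and G: "group G" and b: "b \<in> hom G (box_product \<Omega> \<Delta> M N V E VO VD c)"
  obtains A where "acts_through_U G M N A" "\<And>g. g \<in> carrier G \<Longrightarrow> restrict (A g) VD = b g"
proof -
  define A where "A g = (SOME h. h \<in> U M N \<and> restrict h VD = b g)" for g
  have AU: "A g \<in> U M N \<and> restrict (A g) VD = b g" if "g \<in> carrier G" for g
  proof -
    have "b g \<in> (\<lambda>h. restrict h VD) ` U M N"
      using hom_in_carrier[OF b that] by (simp add: box_product_def box_product_set_def)
    then obtain h where "h \<in> U M N" "b g = restrict h VD" by (rule imageE)
    then have "\<exists>h. h \<in> U M N \<and> restrict h VD = b g" by metis
    then show ?thesis unfolding A_def by (rule someI_ex)
  qed
  have b_apply: "b g y = A g y" if "g \<in> carrier G" "y \<in> VD" for g y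
    using arg_cong[where f = "\<lambda>f. f y", OF conjunct2[OF AU[OF that(1)]]] that(2) by simp
  have "A (g \<otimes>\<^bsub>G\<^esub> h) x = A g (A h x)"
    if g: "g \<in> carrier G" and h: "h \<in> carrier G" and x: "x \<in> V" for g h x
  proof -
    have gh: "g \<otimes>\<^bsub>G\<^esub> h \<in> carrier G" using G g h by (simp add: group.is_monoid monoid.m_closed)
    have Ag: "A g \<in> U M N" and Ah: "A h \<in> U M N" using AU g h by blast+
    have "A (g \<otimes>\<^bsub>G\<^esub> h) x = (A g \<circ> A h) x"
    proof (rule U_group_eq_if_eq_on_VD[OF two conjunct1[OF AU[OF gh]] U_group_comp[OF M N Ag Ah] _ x])
      fix y assume y: "y \<in> VD"
      have "b g \<in> Bij VD" "b h \<in> Bij VD"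
        using restrict_VD_in_Bij[OF Ag] restrict_VD_in_Bij[OF Ah] AU[OF g] AU[OF h] by simp_all
      then have "b (g \<otimes>\<^bsub>G\<^esub> h) = compose VD (b g) (b h)"
        using hom_mult[OF b g h] by (simp add: box_product_def BijGroup_mult)
      have Ahy: "A h y \<in> VD" using U_group_image_VD[OF Ah] y by blast
      have "A (g \<otimes>\<^bsub>G\<^esub> h) y = b (g \<otimes>\<^bsub>G\<^esub> h) y" using b_apply[OF gh y] by simp
      also have "\<dots> = b g (b h y)"
        using \<open>b (g \<otimes>\<^bsub>G\<^esub> h) = compose VD (b g) (b h)\<close> y by (simp add: compose_def)
      also have "\<dots> = A g (A h y)" using b_apply[OF h y] b_apply[OF g Ahy] by simp
      finally show "A (g \<otimes>\<^bsub>G\<^esub> h) y = (A g \<circ> A h) y" by simp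
    qed
    then show ?thesis by simp
  qed
  then have "acts_through_U G M N A"
    unfolding acts_through_U_def using AU by blast
  then show ?thesis
    by (rule that) (use AU in blast)
qed

text \<open>Elements of \<open>U(M,N)\<close> preserve the bipartition, so they never invert an edge.\<close>
lemma tree_action_of_acts_through_U:
  assumes A: "acts_through_U G M N A"
  shows "tree_action G V E (\<lambda>g. restrict (A g) V)" "without_inversion G E (\<lambda>g. restrict (A g) V)"
proof -
  have "(\<lambda>g. restrict (A g) V) \<in> hom G (BijGroup V)"
  proof (rule homI)
    fix g assume "g \<in> carrier G"
    then show "restrict (A g) V \<in> carrier (BijGroup V)"
      using U_groupD(1)[OF acts_through_UD(1)[OF A]] by (simp add: restrict_in_Bij_iff)
  next
    fix g h assume g: "g \<in> carrier G" and h: "h \<in> carrier G"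
    have "restrict (A (g \<otimes>\<^bsub>G\<^esub> h)) V = compose V (restrict (A g) V) (restrict (A h) V)"
      using acts_through_UD(2)[OF A g h] U_group_in_V[OF acts_through_UD(1)[OF A h]]
      by (auto simp: compose_def)
    then show "restrict (A (g \<otimes>\<^bsub>G\<^esub> h)) V = restrict (A g) V \<otimes>\<^bsub>BijGroup V\<^esub> restrict (A h) V"
      using U_groupD(1)[OF acts_through_UD(1)[OF A]] g h by (simp add: restrict_in_Bij_iff BijGroup_mult)
  qed
  then show "tree_action G V E (\<lambda>g. restrict (A g) V)"
    unfolding tree_action_def using U_group_adj[OF acts_through_UD(1)[OF A]] adj_in_V by auto
  show "without_inversion G E (\<lambda>g. restrict (A g) V)"
    unfolding without_inversion_def
  proof (intro ballI allI impI notI)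
    fix g u v
    assume g: "g \<in> carrier G" and e: "E u v" and "restrict (A g) V u = v \<and> restrict (A g) V v = u"
    then have "A g u = v" using adj_in_V by auto
    then show False
      using U_group_VO_iff[OF acts_through_UD(1)[OF A g]] adj_VO_iff[OF e] adj_in_V[OF e] by blast
  qed
qed

lemma local_action_hom:
  assumes M: "perm_group \<Omega> M" and N: "perm_group \<Delta> N" and A: "acts_through_U G M N A"
    and u: "u \<in> V" and fixed: "\<And>g. g \<in> carrier G \<Longrightarrow> A g u = u"
  shows "(\<lambda>g. local_action (colours u) E c (A g) u) \<in> hom G (pgrp (colours u) (if u \<in> VO then M else N))"
    (is "?la \<in> hom G (pgrp ?T ?L)")
proof (rule homI)
  have L: "?L \<subseteq> Bij ?T"
    using perm_group_subset_Bij[OF M] perm_group_subset_Bij[OF N] by (simp add: colours_def)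
  fix g assume g: "g \<in> carrier G"
  show "?la g \<in> carrier (pgrp ?T ?L)"
    using local_action_in[OF acts_through_UD(1)[OF A g] u] by (simp add: pgrp_def)
  fix h assume h: "h \<in> carrier G"
  have "?la (g \<otimes>\<^bsub>G\<^esub> h) = local_action ?T E c (A g \<circ> A h) u"
    using acts_through_UD(2)[OF A g h] by (intro local_action_cong[OF u]) simp
  also have "\<dots> = compose ?T (?la g) (?la h)"
    using local_action_comp[OF acts_through_UD(1)[OF A g] acts_through_UD(1)[OF A h] u] fixed[OF h]
    by simp
  also have "\<dots> = ?la g \<otimes>\<^bsub>pgrp ?T ?L\<^esub> ?la h"
  proof -
    have "?la g \<in> Bij ?T" "?la h \<in> Bij ?T"
      using local_action_in[OF acts_through_UD(1)[OF A g] u]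
        local_action_in[OF acts_through_UD(1)[OF A h] u] L
      by blast+
    then show ?thesis by (simp add: pgrp_def BijGroup_mult)
  qed
  finally show "?la (g \<otimes>\<^bsub>G\<^esub> h) = ?la g \<otimes>\<^bsub>pgrp ?T ?L\<^esub> ?la h" .
qed

lemma local_action_nontrivial:
  assumes g: "g \<in> U M N" and e: "E u w" and fixed: "g u = u" and moved: "g w \<noteq> w"
  shows "local_action (colours u) E c g u \<noteq> (\<lambda>a\<in>colours u. a)"
proof -
  let ?a = "c (u, w)"
  have a: "?a \<in> colours u" using colour_in_colours[OF e] .
  have "local_action (colours u) E c g u ?a = c (u, g w)"
    using local_action_apply[OF a] nbr_colour[OF e] fixed by simp
  moreover have "c (u, g w) \<noteq> ?a"
    using colour_inj[OF _ e] U_group_adj[OF g e] fixed moved by metis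
  ultimately show ?thesis using a by force
qed

lemma FA_action_through_U_quotient:
  fixes G :: "('g, 'b) monoid_scheme"
  assumes FA: "property_FA G" and G: "group G" and M: "perm_group \<Omega> M" and N: "perm_group \<Delta> N"
    and A: "acts_through_U G M N A" and moved: "g \<in> carrier G" "y \<in> V" "A g y \<noteq> y"
  shows "\<exists>K H. K \<lhd> G \<and> K \<noteq> carrier G \<and>
           (subgroup H (pgrp \<Omega> M) \<and> G Mod K \<cong> pgrp \<Omega> H \<or> subgroup H (pgrp \<Delta> N) \<and> G Mod K \<cong> pgrp \<Delta> H)"
proof -
  obtain w0 where w0: "w0 \<in> V" "\<forall>g\<in>carrier G. A g w0 = w0"
    using property_FA_fixed_vertex[OF FA G tree_action_of_acts_through_U[OF A]] by auto
  define F where "F = {x \<in> V. \<forall>g\<in>carrier G. A g x = x}"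
  have "w0 \<in> F" "y \<notin> F" using w0 moved unfolding F_def by auto
  then obtain u w where uw: "u \<in> F" "w \<notin> F" "E u w"
    using walk_leaves_set[OF path_walk[OF w0(1) moved(2)]]
    unfolding path_hd[OF w0(1) moved(2)] path_last[OF w0(1) moved(2)] by blast
  have u: "u \<in> V" and fixed: "\<And>g. g \<in> carrier G \<Longrightarrow> A g u = u" using uw(1) unfolding F_def by auto
  obtain g1 where g1: "g1 \<in> carrier G" "A g1 w \<noteq> w" using uw(2,3) adj_in_V unfolding F_def by blast
  let ?T = "colours u" and ?L = "if u \<in> VO then M else N"
  have L: "perm_group ?T ?L" using M N unfolding colours_def by simp
  have "local_action ?T E c (A g1) u \<noteq> \<one>\<^bsub>pgrp ?T ?L\<^esub>"
    using local_action_nontrivial[OF acts_through_UD(1)[OF A g1(1)] uw(3) fixed[OF g1(1)] g1(2)]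
    by (simp add: pgrp_def)
  then obtain K H where "K \<lhd> G" "K \<noteq> carrier G" "subgroup H (pgrp ?T ?L)" "G Mod K \<cong> pgrp ?T H"
    using nontrivial_hom_quotient_iso_subgroup[OF G group_pgrp[OF L]
        local_action_hom[OF M N A u fixed] g1(1)]
    by (auto simp: pgrp_def)
  then show ?thesis unfolding colours_def by (cases "u \<in> VO") auto
qed

end

lemma coloured_tree_of_legal:
  "legal_coloured_biregular_tree \<Omega> \<Delta> V E VO VD c \<Longrightarrow> coloured_tree \<Omega> \<Delta> V E VO VD c"
  unfolding coloured_tree_def coloured_tree_axioms_def tree_def legal_coloured_biregular_tree_def
  by blast

lemma nontrivial_hom_to_box_product:
  assumes data: "box_data \<Omega> \<Delta> M N" and T: "legal_coloured_biregular_tree \<Omega> \<Delta> V E VO VD c"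
  obtains \<psi> m where "\<psi> \<in> hom (pgrp \<Omega> M) (box_product \<Omega> \<Delta> M N V E VO VD c)"
    "m \<in> M" "\<psi> m \<noteq> \<psi> \<one>\<^bsub>pgrp \<Omega> M\<^esub>"
proof -
  interpret coloured_tree \<Omega> \<Delta> V E VO VD c using coloured_tree_of_legal[OF T] .
  have M: "nontrivial_perm_group \<Omega> M" "perm_group \<Omega> M" and N: "perm_group \<Delta> N"
    and "\<Delta> \<noteq> {}" "\<Omega> \<noteq> {}"
    using data unfolding box_data_def nontrivial_perm_group_def by auto
  obtain v0 where "v0 \<in> VO" using VO_nonempty[OF \<open>\<Delta> \<noteq> {}\<close>] .
  then interpret rooted_coloured_tree \<Omega> \<Delta> V E VO VD c v0
    using \<open>\<Omega> \<noteq> {}\<close> by unfold_locales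
  obtain m where "m \<in> M" "restrict (lift m) VD \<noteq> (\<lambda>x\<in>VD. x)"
    using restrict_lift_nontrivial[OF M(1)] .
  moreover have "restrict (lift \<one>\<^bsub>pgrp \<Omega> M\<^esub>) VD = (\<lambda>x\<in>VD. x)"
    using lift_id VD_in_V by (auto simp: pgrp_def)
  ultimately show ?thesis
    using that[OF restrict_lift_hom[OF M(2) N]] by simp
qed

lemma FA_hom_to_box_product_quotient:
  fixes G :: "('g, 'b) monoid_scheme"
  assumes data: "box_data \<Omega> \<Delta> M N" and T: "legal_coloured_biregular_tree \<Omega> \<Delta> V E VO VD c"
    and FA: "property_FA G" and G: "group G" and b: "b \<in> hom G (box_product \<Omega> \<Delta> M N V E VO VD c)"
    and nontrivial: "g \<in> carrier G" "b g \<noteq> b \<one>\<^bsub>G\<^esub>"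
  shows "\<exists>K H. K \<lhd> G \<and> K \<noteq> carrier G \<and>
           (subgroup H (pgrp \<Omega> M) \<and> G Mod K \<cong> pgrp \<Omega> H \<or> subgroup H (pgrp \<Delta> N) \<and> G Mod K \<cong> pgrp \<Delta> H)"
proof -
  interpret coloured_tree \<Omega> \<Delta> V E VO VD c using coloured_tree_of_legal[OF T] .
  have two: "\<exists>a\<in>\<Omega>. \<exists>b\<in>\<Omega>. a \<noteq> b" and M: "perm_group \<Omega> M" and N: "perm_group \<Delta> N"
    using data unfolding box_data_def nontrivial_perm_group_def by auto
  obtain A where A: "acts_through_U G M N A"
    and restrict_A: "\<And>g. g \<in> carrier G \<Longrightarrow> restrict (A g) VD = b g"
    using box_product_hom_lifts_to_U[OF two M N G b] by blast
  have "restrict (A g) VD \<noteq> restrict (A \<one>\<^bsub>G\<^esub>) VD"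
    using nontrivial restrict_A[OF nontrivial(1)] restrict_A[OF monoid.one_closed[OF group.is_monoid[OF G]]]
    by simp
  then obtain y where y: "y \<in> VD" "A g y \<noteq> A \<one>\<^bsub>G\<^esub> y"
    by (meson restrict_ext)
  then have "A g y \<noteq> y" using acts_through_U_one[OF G A VD_in_V] by simp
  then show ?thesis
    using FA_action_through_U_quotient[OF FA G M N A nontrivial(1) VD_in_V[OF y(1)]] by blast
qed

theorem lemma7p3:
  fixes \<Omega>1 \<Delta>1 :: "'c1 set" and M1 N1 :: "('c1 \<Rightarrow> 'c1) set"
    and \<Omega>2 \<Delta>2 :: "'c2 set" and M2 N2 :: "('c2 \<Rightarrow> 'c2) set"
    and V1 VO1 VD1 :: "'v1 set" and E1 :: "'v1 \<Rightarrow> 'v1 \<Rightarrow> bool" and c1 :: "'v1 \<times> 'v1 \<Rightarrow> 'c1"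
    and V2 VO2 VD2 :: "'v2 set" and E2 :: "'v2 \<Rightarrow> 'v2 \<Rightarrow> bool" and c2 :: "'v2 \<times> 'v2 \<Rightarrow> 'c2"
  assumes "box_data \<Omega>1 \<Delta>1 M1 N1"
    and "box_data \<Omega>2 \<Delta>2 M2 N2"
    and "legal_coloured_biregular_tree \<Omega>1 \<Delta>1 V1 E1 VO1 VD1 c1"
    and "legal_coloured_biregular_tree \<Omega>2 \<Delta>2 V2 E2 VO2 VD2 c2"
    and "property_FA (pgrp \<Omega>1 M1)"
    and "\<And>K H. K \<lhd> pgrp \<Omega>1 M1 \<Longrightarrow> K \<noteq> M1 \<Longrightarrow> subgroup H (pgrp \<Omega>2 M2)
           \<Longrightarrow> \<not> (pgrp \<Omega>1 M1 Mod K \<cong> pgrp \<Omega>2 H)"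
    and "\<And>K H. K \<lhd> pgrp \<Omega>1 M1 \<Longrightarrow> K \<noteq> M1 \<Longrightarrow> subgroup H (pgrp \<Delta>2 N2)
           \<Longrightarrow> \<not> (pgrp \<Omega>1 M1 Mod K \<cong> pgrp \<Delta>2 H)"
  shows "\<not> (box_product \<Omega>1 \<Delta>1 M1 N1 V1 E1 VO1 VD1 c1 \<cong> box_product \<Omega>2 \<Delta>2 M2 N2 V2 E2 VO2 VD2 c2)"
proof
  assume "box_product \<Omega>1 \<Delta>1 M1 N1 V1 E1 VO1 VD1 c1 \<cong> box_product \<Omega>2 \<Delta>2 M2 N2 V2 E2 VO2 VD2 c2"
  then obtain \<phi> where \<phi>: "\<phi> \<in> iso (box_product \<Omega>1 \<Delta>1 M1 N1 V1 E1 VO1 VD1 c1)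
      (box_product \<Omega>2 \<Delta>2 M2 N2 V2 E2 VO2 VD2 c2)"
    unfolding is_iso_def by blast
  obtain \<psi> m where \<psi>: "\<psi> \<in> hom (pgrp \<Omega>1 M1) (box_product \<Omega>1 \<Delta>1 M1 N1 V1 E1 VO1 VD1 c1)"
    and m: "m \<in> M1" "\<psi> m \<noteq> \<psi> \<one>\<^bsub>pgrp \<Omega>1 M1\<^esub>"
    using nontrivial_hom_to_box_product[OF assms(1,3)] .
  have G: "group (pgrp \<Omega>1 M1)" and car: "carrier (pgrp \<Omega>1 M1) = M1"
    using assms(1) group_pgrp unfolding box_data_def nontrivial_perm_group_def by (auto simp: pgrp_def)
  have "\<one>\<^bsub>pgrp \<Omega>1 M1\<^esub> \<in> M1"
    using monoid.one_closed[OF group.is_monoid[OF G]] car by simp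
  then have "(\<phi> \<circ> \<psi>) m \<noteq> (\<phi> \<circ> \<psi>) \<one>\<^bsub>pgrp \<Omega>1 M1\<^esub>"
    using m hom_in_carrier[OF \<psi>] \<phi> car unfolding iso_def bij_betw_def inj_on_def by auto
  then obtain K H where "K \<lhd> pgrp \<Omega>1 M1" "K \<noteq> M1"
      "subgroup H (pgrp \<Omega>2 M2) \<and> pgrp \<Omega>1 M1 Mod K \<cong> pgrp \<Omega>2 H
       \<or> subgroup H (pgrp \<Delta>2 N2) \<and> pgrp \<Omega>1 M1 Mod K \<cong> pgrp \<Delta>2 H"
    using FA_hom_to_box_product_quotient[OF assms(2,4,5) G hom_compose[OF \<psi>]] \<phi> m(1) car
    unfolding iso_def by blast
  then show False using assms(6,7) by blast
qed

end
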